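(* In the source coding problem with receiver side information described in the context, suppose $U=Y$ and $V=X$ (i.e. $U_i=Y_i$ and $V_i=X_i$ for all $i$). Then the set $\mathcal{R}$ of achievable rate triples equals the closure of $\bigcup_{p\in\mathcal{P}^{**}}\mathcal{R}^{(p)**}$.
   Context: Let $\mathcal{X},\mathcal{Y},\mathcal{U},\mathcal{V}$ be finite sets and let $\{(X_i,Y_i,U_i,V_i)\}_{i\ge1}$ be i.i.d. with joint distribution $\mathcal{Q}_{XYUV}$, with $(X,Y)$-marginal $\mathcal{Q}_{XY}$. For $i=0,1,2$ let $\mathcal{M}_i=\{1,\dots,|\mathcal{M}_i|\}$ be finite index sets. A code of block length $n$ consists of an encoder $e^{(n)}:\mathcal{X}^n\times\mathcal{Y}^n\to\mathcal{M}_0\times\mathcal{M}_1\times\mathcal{M}_2$, $(M_0,M_1,M_2)=e^{(n)}(X^n,Y^n)$, a decoder $d_x^{(n)}:\mathcal{M}_0\times\mathcal{M}_1\times\mathcal{U}^n\to\mathcal{X}^n$, $\widehat X^n=d_x^{(n)}(M_0,M_1,U^n)$, and a decoder $d_y^{(n)}:\mathcal{M}_0\times\mathcal{M}_2\times\mathcal{V}^n\to\mathcal{Y}^n$, $\widehat Y^n=d_y^{(n)}(M_0,M_2,V^n)$. Let $P_e=\max\{\Pr[\widehat X^n\ne X^n],\Pr[\widehat Y^n\ne Y^n]\}$. A triple $(R_0,R_1,R_2)$ is achievable if for every $\epsilon>0$ and all sufficiently large $n$ there is such a code with $P_e\le\epsilon$ and $(1/n)\log_2|\mathcal{M}_i|\le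 R_i+\epsilon$, $i=0,1,2$; $\mathcal{R}$ is the set of achievable triples. Let $\mathcal{A},\mathcal{B}$ be finite sets with $|\mathcal{A}|\le|\mathcal{X}||\mathcal{Y}|+1$, $|\mathcal{B}|\le|\mathcal{X}||\mathcal{Y}|+1$. Let $\mathcal{P}^{**}$ be the set of probability functions $p$ on $\mathcal{A}\times\mathcal{B}\times\mathcal{X}\times\mathcal{Y}$ such that $\sum_{(a,b)\in\mathcal{A}\times\mathcal{B}}p(a,b,x,y)=\mathcal{Q}_{XY}(x,y)$ for all $(x,y)$. For $p\in\mathcal{P}^{**}$ let $\mathcal{R}^{(p)**}$ be the set of $(R_0,R_1,R_2)$ with $R_0\ge\max\{H_p(X|A,Y),H_p(Y|B,X)\}$, $R_1\ge I_p(X;A|Y)$, $R_2\ge I_p(Y;B|X)$. *)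

theory Defs
  imports "HOL-Analysis.Analysis" "HOL-Probability.Probability_Mass_Function"
begin

definition blockprob :: "('x \<times> 'y) pmf \<Rightarrow> 'x list \<Rightarrow> 'y list \<Rightarrow> real" where
  "blockprob Q xs ys = (\<Prod>i<length xs. pmf Q (xs ! i, ys ! i))"

definition blocks :: "nat \<Rightarrow> ('x list \<times> 'y list) set" where
  "blocks n = {(xs, ys). length xs = n \<and> length ys = n}"

text \<open>Pr[Xhat \<noteq> X]: decoder x sees (M0, M1, U^n) with U^n = Y^n.\<close>
definition err_x ::
  "('x \<times> 'y) pmf \<Rightarrow> nat \<Rightarrow> ('x list \<Rightarrow> 'y list \<Rightarrow> nat \<times> nat \<times> nat)
     \<Rightarrow> (nat \<Rightarrow> nat \<Rightarrow> 'y list \<Rightarrow> 'x list) \<Rightarrow> real" where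
  "err_x Q n e dx = (\<Sum>(xs, ys)\<in>blocks n.
      (case e xs ys of (m0, m1, m2) \<Rightarrow> if dx m0 m1 ys \<noteq> xs then blockprob Q xs ys else 0))"

text \<open>Pr[Yhat \<noteq> Y]: decoder y sees (M0, M2, V^n) with V^n = X^n.\<close>
definition err_y ::
  "('x \<times> 'y) pmf \<Rightarrow> nat \<Rightarrow> ('x list \<Rightarrow> 'y list \<Rightarrow> nat \<times> nat \<times> nat)
     \<Rightarrow> (nat \<Rightarrow> nat \<Rightarrow> 'x list \<Rightarrow> 'y list) \<Rightarrow> real" where
  "err_y Q n e dy = (\<Sum>(xs, ys)\<in>blocks n.
      (case e xs ys of (m0, m1, m2) \<Rightarrow> if dy m0 m2 xs \<noteq> ys then blockprob Q xs ys else 0))"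

definition achievable :: "('x \<times> 'y) pmf \<Rightarrow> real \<times> real \<times> real \<Rightarrow> bool" where
  "achievable Q R \<longleftrightarrow> (case R of (R0, R1, R2) \<Rightarrow>
     (\<forall>\<epsilon>>0. \<exists>N. \<forall>n\<ge>N. \<exists>(m0::nat) (m1::nat) (m2::nat)
        (e :: 'x list \<Rightarrow> 'y list \<Rightarrow> nat \<times> nat \<times> nat)
        (dx :: nat \<Rightarrow> nat \<Rightarrow> 'y list \<Rightarrow> 'x list)
        (dy :: nat \<Rightarrow> nat \<Rightarrow> 'x list \<Rightarrow> 'y list).
          0 < m0 \<and> 0 < m1 \<and> 0 < m2 \<and>
          (\<forall>(xs, ys)\<in>blocks n. e xs ys \<in> {1..m0} \<times> {1..m1} \<times> {1..m2}) \<and>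
          max (err_x Q n e dx) (err_y Q n e dy) \<le> \<epsilon> \<and>
          log 2 (real m0) / real n \<le> R0 + \<epsilon> \<and>
          log 2 (real m1) / real n \<le> R1 + \<epsilon> \<and>
          log 2 (real m2) / real n \<le> R2 + \<epsilon>))"

definition achievable_region :: "('x \<times> 'y) pmf \<Rightarrow> (real \<times> real \<times> real) set" where
  "achievable_region Q = {R. achievable Q R}"

definition marg :: "'w set \<Rightarrow> ('w \<Rightarrow> real) \<Rightarrow> ('w \<Rightarrow> 'v) \<Rightarrow> 'v \<Rightarrow> real" where
  "marg \<Omega> p h v = (\<Sum>\<omega>\<in>{\<omega>\<in>\<Omega>. h \<omega> = v}. p \<omega>)"

text \<open>Conditional entropy H(F|G) in bits (terms with p = 0 contribute 0).\<close>
definition cond_ent :: "'w set \<Rightarrow> ('w \<Rightarrow> real) \<Rightarrow> ('w \<Rightarrow> 'f) \<Rightarrow> ('w \<Rightarrow> 'g) \<Rightarrow> real" where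
  "cond_ent \<Omega> p F G = - (\<Sum>\<omega>\<in>\<Omega>. p \<omega> *
      log 2 (marg \<Omega> p (\<lambda>w. (F w, G w)) (F \<omega>, G \<omega>) / marg \<Omega> p G (G \<omega>)))"

definition cond_mi :: "'w set \<Rightarrow> ('w \<Rightarrow> real) \<Rightarrow> ('w \<Rightarrow> 'f) \<Rightarrow> ('w \<Rightarrow> 'h) \<Rightarrow> ('w \<Rightarrow> 'g) \<Rightarrow> real" where
  "cond_mi \<Omega> p F H G = cond_ent \<Omega> p F G - cond_ent \<Omega> p F (\<lambda>w. (H w, G w))"

text \<open>Auxiliary alphabets A, B are represented as {..<K} with K = |X||Y| + 1;
  every finite A, B with |A|, |B| \<le> K embeds into this.\<close>
definition aux_card :: "'x itself \<Rightarrow> 'y itself \<Rightarrow> nat" where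
  "aux_card _ _ = CARD('x) * CARD('y) + 1"

definition Omega :: "'x itself \<Rightarrow> 'y itself \<Rightarrow> (nat \<times> nat \<times> 'x \<times> 'y) set" where
  "Omega tx ty = {..<aux_card tx ty} \<times> {..<aux_card tx ty} \<times> UNIV \<times> UNIV"

definition Pss :: "('x::finite \<times> 'y::finite) pmf \<Rightarrow> (nat \<times> nat \<times> 'x \<times> 'y \<Rightarrow> real) set" where
  "Pss Q = {p. (\<forall>\<omega>. \<omega> \<notin> Omega TYPE('x) TYPE('y) \<longrightarrow> p \<omega> = 0) \<and>
               (\<forall>\<omega>\<in>Omega TYPE('x) TYPE('y). 0 \<le> p \<omega>) \<and>
               (\<forall>x y. (\<Sum>(a, b)\<in>{..<aux_card TYPE('x) TYPE('y)} \<times> {..<aux_card TYPE('x) TYPE('y)}.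
                          p (a, b, x, y)) = pmf Q (x, y))}"

definition Rss :: "(nat \<times> nat \<times> 'x::finite \<times> 'y::finite \<Rightarrow> real) \<Rightarrow> (real \<times> real \<times> real) set" where
  "Rss p = (let \<Omega> = Omega TYPE('x) TYPE('y);
                A = (\<lambda>(a, b, x, y). a); B = (\<lambda>(a, b, x, y). b);
                X = (\<lambda>(a::nat, b::nat, x::'x, y::'y). x); Y = (\<lambda>(a, b, x, y). y) in
     {(R0, R1, R2).
        R0 \<ge> max (cond_ent \<Omega> p X (\<lambda>w. (A w, Y w))) (cond_ent \<Omega> p Y (\<lambda>w. (B w, X w))) \<and>
        R1 \<ge> cond_mi \<Omega> p X A Y \<and>
        R2 \<ge> cond_mi \<Omega> p Y B X})"

end

theory Submission
  imports Defs
begin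

text \<open>
  Both sides turn out to be the closed polytope \<open>R \<ge> 0, H(X|Y) \<le> R0 + R1, H(Y|X) \<le> R0 + R2\<close>.

  Since conditioning reduces entropy, every \<open>Rss p\<close> lies in the polytope; conversely, taking for
  \<open>A\<close> an erasure of \<open>X\<close> with erasure probability \<open>1 - l\<close> gives \<open>H(X|A,Y) = (1 - l) H(X|Y)\<close> and
  \<open>I(X;A|Y) = l H(X|Y)\<close>, and similarly for \<open>B\<close>, which reaches every point of the polytope.

  Achievability: by Chebyshev's inequality for the block sum of the conditional information
  density, given \<open>Y^n\<close> the block \<open>X^n\<close> lies with high probability among at most
  \<open>2^(n (H(X|Y) + \<delta>))\<close> candidates, so after random binning into \<open>2^(n (H(X|Y) + 2\<delta>))\<close> bins
  the decoder seeing \<open>Y^n\<close> recovers \<open>X^n\<close> from its bin index; likewise for \<open>Y^n\<close>. Each bin index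
  is split into a private part and a residue modulo \<open>m0\<close>; the common message carries the sum of
  the two residues, and each decoder subtracts the residue of the source it observes.

  Converse: given \<open>Y^n\<close>, a decoder with at most \<open>2^(n (H(X|Y) - \<gamma>))\<close> messages outputs at most
  that many blocks, each atypical or of conditional probability below \<open>2^(-n (H(X|Y) - \<gamma>/2))\<close>,
  so it succeeds with probability tending to 0.
\<close>

lemma sum_pmf_UNIV: "(\<Sum>z\<in>UNIV. pmf (Q :: 'a::finite pmf) z) = 1"
  by (rule sum_pmf_eq_1) auto

lemma sum_pmf_mult_const: "(\<Sum>z\<in>UNIV. pmf (Q :: 'a::finite pmf) z * c) = c"
  by (simp add: sum_distrib_right[symmetric] sum_pmf_UNIV)

lemma pmf_swap: "pmf (map_pmf prod.swap Q) (y, x) = pmf Q (x, y)"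
  using pmf_map_inj'[of prod.swap Q "(x, y)"] by simp

lemma map_pmf_swap_swap [simp]: "map_pmf prod.swap (map_pmf prod.swap Q) = Q"
  by (simp add: map_pmf_comp)

lemma eventually_const_div_le: "0 < e \<Longrightarrow> eventually (\<lambda>n. c / real n \<le> e) sequentially"
  using order_tendstoD(2)[OF lim_const_over_n[of c], of e] by (auto elim: eventually_mono)

lemma two_powr_neg_le:
  fixes t :: real
  assumes "0 < t"
  shows "2 powr (- t) \<le> 1 / (t * ln 2)"
proof -
  have "t * ln 2 \<le> exp (t * ln 2)"
    using exp_ge_add_one_self[of "t * ln 2"] by linarith
  also have "exp (t * ln 2) = 2 powr t"
    by (simp add: powr_def mult.commute)
  finally have "inverse (2 powr t) \<le> inverse (t * ln 2)"
    using assms by (intro le_imp_inverse_le) auto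
  then show ?thesis
    by (simp add: powr_minus inverse_eq_divide)
qed

lemma nat_ceiling_le_double: "1 \<le> x \<Longrightarrow> real (nat \<lceil>x\<rceil>) \<le> 2 * x"
  using of_int_ceiling_le_add_one[of x] by linarith

lemma exists_le_average:
  fixes f :: "'c \<Rightarrow> real"
  assumes "finite C" "C \<noteq> {}" "(\<Sum>c\<in>C. f c) \<le> real (card C) * B"
  shows "\<exists>c\<in>C. f c \<le> B"
proof (rule ccontr)
  assume "\<not> ?thesis"
  then have "(\<Sum>c\<in>C. B) < (\<Sum>c\<in>C. f c)"
    using assms(1,2) by (intro sum_strict_mono) auto
  then show False using assms(3) by simp
qed

definition pair_sum :: "('a \<times> 'b \<Rightarrow> real) \<Rightarrow> 'a list \<Rightarrow> 'b list \<Rightarrow> real" where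
  "pair_sum f xs ys = (\<Sum>i<length xs. f (xs ! i, ys ! i))"

definition prob_blocks :: "('a \<times> 'b) pmf \<Rightarrow> nat \<Rightarrow> ('a list \<Rightarrow> 'b list \<Rightarrow> bool) \<Rightarrow> real" where
  "prob_blocks Q n P = (\<Sum>(xs, ys)\<in>blocks n. if P xs ys then blockprob Q xs ys else 0)"

lemma blockprob_Nil [simp]: "blockprob Q [] ys = 1"
  by (simp add: blockprob_def)

lemma blockprob_Cons [simp]: "blockprob Q (x # xs) (y # ys) = pmf Q (x, y) * blockprob Q xs ys"
  by (simp add: blockprob_def prod.lessThan_Suc_shift del: prod.lessThan_Suc)

lemma pair_sum_Nil [simp]: "pair_sum f [] ys = 0"
  by (simp add: pair_sum_def)

lemma pair_sum_Cons [simp]: "pair_sum f (x # xs) (y # ys) = f (x, y) + pair_sum f xs ys"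
  by (simp add: pair_sum_def sum.lessThan_Suc_shift del: sum.lessThan_Suc)

lemma blockprob_nonneg: "0 \<le> blockprob Q xs ys"
  by (simp add: blockprob_def prod_nonneg)

lemma blockprob_swap:
  "length xs = length ys \<Longrightarrow> blockprob (map_pmf prod.swap Q) ys xs = blockprob Q xs ys"
  by (simp add: blockprob_def pmf_swap)

lemma blocks_eq: "blocks n = {xs. length xs = n} \<times> {ys. length ys = n}"
  by (auto simp: blocks_def)

lemma finite_lists_length [simp]: "finite {xs :: 'a::finite list. length xs = n}"
  using finite_lists_length_eq[of "UNIV :: 'a set"] by simp

lemma finite_blocks [simp]: "finite (blocks n :: ('a::finite list \<times> 'b::finite list) set)"
  by (simp add: blocks_eq)

lemma sum_lists_Suc:
  "(\<Sum>xs\<in>{xs. length xs = Suc n}. F xs) = (\<Sum>x\<in>(UNIV :: 'a::finite set). \<Sum>xs\<in>{xs. length xs = n}. F (x # xs))"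
proof -
  have "{xs :: 'a list. length xs = Suc n} = case_prod (#) ` (UNIV \<times> {xs. length xs = n})"
    by (auto simp: image_iff length_Suc_conv)
  moreover have "inj_on (case_prod (#)) (UNIV \<times> {xs :: 'a list. length xs = n})"
    by (auto simp: inj_on_def)
  ultimately show ?thesis
    by (simp add: sum.reindex sum.cartesian_product')
qed

lemma sum_blocks_Suc:
  "(\<Sum>(xs, ys)\<in>blocks (Suc n). F xs ys) =
   (\<Sum>z\<in>(UNIV :: ('a::finite \<times> 'b::finite) set). \<Sum>(xs, ys)\<in>blocks n. F (fst z # xs) (snd z # ys))"
proof -
  have "(\<Sum>(xs, ys)\<in>blocks (Suc n). F xs ys) =
      (\<Sum>x\<in>UNIV. \<Sum>xs\<in>{xs. length xs = n}. \<Sum>y\<in>UNIV. \<Sum>ys\<in>{ys. length ys = n}. F (x # xs) (y # ys))"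
    unfolding blocks_eq sum.cartesian_product' by (simp add: sum_lists_Suc)
  also have "\<dots> = (\<Sum>x\<in>UNIV. \<Sum>y\<in>UNIV. \<Sum>xs\<in>{xs. length xs = n}. \<Sum>ys\<in>{ys. length ys = n}. F (x # xs) (y # ys))"
    by (simp add: sum.swap[of _ "{xs :: 'a list. length xs = n}"])
  finally show ?thesis
    by (simp add: blocks_eq sum.cartesian_product' UNIV_Times_UNIV[symmetric] del: UNIV_Times_UNIV)
qed

lemma sum_blocks_swap:
  "(\<Sum>(xs, ys)\<in>blocks n. f xs ys) = (\<Sum>(ys, xs)\<in>blocks n. f xs ys)"
proof -
  have "bij_betw prod.swap (blocks n) (blocks n)"
    by (rule bij_betw_byWitness[where f' = prod.swap]) (auto simp: blocks_def)
  from sum.reindex_bij_betw[OF this, of "\<lambda>(xs, ys). f xs ys"] show ?thesis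
    by (simp add: case_prod_unfold)
qed

lemma sum_blockprob:
  "(\<Sum>(xs, ys)\<in>blocks n. blockprob (Q :: ('a::finite \<times> 'b::finite) pmf) xs ys) = 1"
proof (induction n)
  case 0
  then show ?case by (simp add: blocks_def)
next
  case (Suc n)
  then show ?case
    using sum_pmf_UNIV[of Q] unfolding sum_blocks_Suc
    by (simp add: sum_distrib_left[symmetric] sum_distrib_right[symmetric] case_prod_unfold)
qed

lemma prob_blocks_mono:
  assumes "\<And>xs ys. (xs, ys) \<in> blocks n \<Longrightarrow> 0 < blockprob Q xs ys \<Longrightarrow> P xs ys \<Longrightarrow> P' xs ys"
  shows "prob_blocks Q n P \<le> prob_blocks Q n P'"
  unfolding prob_blocks_def
  using assms blockprob_nonneg[of Q] by (intro sum_mono) (force simp: order_le_less)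

lemma prob_blocks_disj:
  "prob_blocks Q n (\<lambda>xs ys. P xs ys \<or> P' xs ys) \<le> prob_blocks Q n P + prob_blocks Q n P'"
  unfolding prob_blocks_def sum.distrib[symmetric]
  using blockprob_nonneg[of Q] by (intro sum_mono) auto

lemma prob_blocks_not:
  "prob_blocks (Q :: ('a::finite \<times> 'b::finite) pmf) n (\<lambda>xs ys. \<not> P xs ys) = 1 - prob_blocks Q n P"
proof -
  have "prob_blocks Q n (\<lambda>xs ys. \<not> P xs ys) + prob_blocks Q n P = (\<Sum>(xs, ys)\<in>blocks n. blockprob Q xs ys)"
    unfolding prob_blocks_def sum.distrib[symmetric] by (intro sum.cong) auto
  then show ?thesis by (simp add: sum_blockprob)
qed

subsection \<open>Chebyshev's inequality for sums along a block\<close>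

lemma sum_blockprob_pair_sum:
  fixes Q :: "('a::finite \<times> 'b::finite) pmf"
  assumes "(\<Sum>z\<in>UNIV. pmf Q z * f z) = 0"
  shows "(\<Sum>(xs, ys)\<in>blocks n. blockprob Q xs ys * pair_sum f xs ys) = 0"
proof (induction n)
  case 0
  then show ?case by (simp add: blocks_def)
next
  case (Suc n)
  have "(\<Sum>(xs, ys)\<in>blocks (Suc n). blockprob Q xs ys * pair_sum f xs ys) =
      (\<Sum>z\<in>UNIV. pmf Q z * f z * (\<Sum>(xs, ys)\<in>blocks n. blockprob Q xs ys)
        + pmf Q z * (\<Sum>(xs, ys)\<in>blocks n. blockprob Q xs ys * pair_sum f xs ys))"
    unfolding sum_blocks_Suc
    by (simp add: sum_distrib_left case_prod_unfold algebra_simps sum.distrib)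
  then show ?case
    using Suc assms by (simp add: sum_blockprob sum.distrib sum_distrib_right[symmetric])
qed

lemma sum_blockprob_pair_sum_sq:
  fixes Q :: "('a::finite \<times> 'b::finite) pmf"
  assumes "(\<Sum>z\<in>UNIV. pmf Q z * f z) = 0"
  shows "(\<Sum>(xs, ys)\<in>blocks n. blockprob Q xs ys * (pair_sum f xs ys)\<^sup>2) = real n * (\<Sum>z\<in>UNIV. pmf Q z * (f z)\<^sup>2)"
proof (induction n)
  case 0
  then show ?case by (simp add: blocks_def)
next
  case (Suc n)
  have "(\<Sum>(xs, ys)\<in>blocks (Suc n). blockprob Q xs ys * (pair_sum f xs ys)\<^sup>2) =
      (\<Sum>z\<in>UNIV. pmf Q z * (f z)\<^sup>2 * (\<Sum>(xs, ys)\<in>blocks n. blockprob Q xs ys)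
        + 2 * (pmf Q z * f z) * (\<Sum>(xs, ys)\<in>blocks n. blockprob Q xs ys * pair_sum f xs ys)
        + pmf Q z * (\<Sum>(xs, ys)\<in>blocks n. blockprob Q xs ys * (pair_sum f xs ys)\<^sup>2))"
    unfolding sum_blocks_Suc
    by (simp add: sum_distrib_left case_prod_unfold algebra_simps sum.distrib power2_eq_square)
  also have "\<dots> = (\<Sum>z\<in>UNIV. pmf Q z * (f z)\<^sup>2) + real n * (\<Sum>z\<in>UNIV. pmf Q z * (f z)\<^sup>2)"
    using Suc sum_blockprob_pair_sum[OF assms] by (simp add: sum_blockprob sum.distrib sum_pmf_mult_const)
  finally show ?case by (simp add: algebra_simps)
qed

lemma prob_blocks_pair_sum_ge:
  fixes Q :: "('a::finite \<times> 'b::finite) pmf"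
  assumes "(\<Sum>z\<in>UNIV. pmf Q z * f z) = 0" and "0 < t"
  shows "prob_blocks Q n (\<lambda>xs ys. t \<le> \<bar>pair_sum f xs ys\<bar>) \<le> real n * (\<Sum>z\<in>UNIV. pmf Q z * (f z)\<^sup>2) / t\<^sup>2"
proof -
  have "(if t \<le> \<bar>s\<bar> then b else 0) \<le> b * (s\<^sup>2 / t\<^sup>2)" if "0 \<le> b" for b s :: real
  proof -
    have "t \<le> \<bar>s\<bar> \<Longrightarrow> 1 \<le> s\<^sup>2 / t\<^sup>2"
      using \<open>0 < t\<close> by (metis abs_le_square_iff abs_of_pos le_divide_eq_1_pos zero_less_power)
    then show ?thesis using mult_left_mono[of 1 "s\<^sup>2 / t\<^sup>2" b] that by auto
  qed
  then have "prob_blocks Q n (\<lambda>xs ys. t \<le> \<bar>pair_sum f xs ys\<bar>)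
      \<le> (\<Sum>(xs, ys)\<in>blocks n. blockprob Q xs ys * (pair_sum f xs ys)\<^sup>2) / t\<^sup>2"
    unfolding prob_blocks_def sum_divide_distrib
    by (intro sum_mono) (simp add: case_prod_unfold blockprob_nonneg)
  then show ?thesis
    using sum_blockprob_pair_sum_sq[OF assms(1)] by simp
qed

definition marg_snd :: "('a::finite \<times> 'b) pmf \<Rightarrow> 'b \<Rightarrow> real" where
  "marg_snd Q y = (\<Sum>x\<in>UNIV. pmf Q (x, y))"

definition blockprob_snd :: "('a::finite \<times> 'b) pmf \<Rightarrow> 'b list \<Rightarrow> real" where
  "blockprob_snd Q ys = prod_list (map (marg_snd Q) ys)"

definition cond_entropy :: "('a::finite \<times> 'b::finite) pmf \<Rightarrow> real" where
  "cond_entropy Q = - (\<Sum>z\<in>UNIV. pmf Q z * log 2 (pmf Q z / marg_snd Q (snd z)))"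

definition info_dev :: "('a::finite \<times> 'b::finite) pmf \<Rightarrow> 'a \<times> 'b \<Rightarrow> real" where
  "info_dev Q z = - log 2 (pmf Q z / marg_snd Q (snd z)) - cond_entropy Q"

definition info_var :: "('a::finite \<times> 'b::finite) pmf \<Rightarrow> real" where
  "info_var Q = (\<Sum>z\<in>UNIV. pmf Q z * (info_dev Q z)\<^sup>2)"

definition cond_typical :: "('a::finite \<times> 'b) pmf \<Rightarrow> real \<Rightarrow> 'b list \<Rightarrow> 'a list set" where
  "cond_typical Q T ys = {xs. length xs = length ys \<and> T * blockprob_snd Q ys \<le> blockprob Q xs ys}"

lemma pmf_le_marg_snd: "pmf Q (x, y) \<le> marg_snd Q y"
  unfolding marg_snd_def by (rule member_le_sum) auto

lemma blockprob_snd_nonneg: "0 \<le> blockprob_snd Q ys"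
  by (induction ys) (auto simp: blockprob_snd_def marg_snd_def intro!: sum_nonneg mult_nonneg_nonneg)

lemma sum_blockprob_fst:
  "length ys = n \<Longrightarrow> (\<Sum>xs\<in>{xs. length xs = n}. blockprob Q xs ys) = blockprob_snd Q ys"
proof (induction ys arbitrary: n)
  case Nil
  then show ?case by (simp add: blockprob_snd_def)
next
  case (Cons y ys)
  then obtain m where "n = Suc m" "length ys = m" by auto
  with Cons.IH show ?case
    by (simp add: sum_lists_Suc sum_distrib_left[symmetric] sum_distrib_right[symmetric]
        blockprob_snd_def marg_snd_def)
qed

lemma cond_entropy_nonneg: "0 \<le> cond_entropy Q"
proof -
  have "pmf Q z * log 2 (pmf Q z / marg_snd Q (snd z)) \<le> 0" for z
  proof (cases "pmf Q z = 0")
    case False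
    then have "0 < pmf Q z" by (simp add: order_less_le)
    moreover have "pmf Q z \<le> marg_snd Q (snd z)"
      using pmf_le_marg_snd[of Q "fst z" "snd z"] by simp
    ultimately show ?thesis by (simp add: mult_nonneg_nonpos divide_le_eq_1)
  qed simp
  then show ?thesis unfolding cond_entropy_def by (simp add: sum_nonpos)
qed

lemma sum_info_dev: "(\<Sum>z\<in>UNIV. pmf Q z * info_dev Q z) = 0"
  by (simp add: info_dev_def right_diff_distrib sum_subtractf sum_pmf_mult_const
      cond_entropy_def sum_negf)

lemma blockprob_eq_info_dev:
  assumes "length xs = length ys" and "0 < blockprob Q xs ys"
  shows "blockprob Q xs ys =
    blockprob_snd Q ys * 2 powr (- (pair_sum (info_dev Q) xs ys + real (length xs) * cond_entropy Q))"
  using assms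
proof (induction xs arbitrary: ys)
  case Nil
  then show ?case by (simp add: blockprob_snd_def)
next
  case (Cons x xs)
  then obtain y ys' where ys: "ys = y # ys'" and len: "length xs = length ys'"
    by (cases ys) auto
  have "0 < pmf Q (x, y)" "0 < blockprob Q xs ys'"
    using Cons.prems ys pmf_nonneg[of Q "(x, y)"] blockprob_nonneg[of Q xs ys']
    by (auto simp: zero_less_mult_iff)
  moreover from this(1) have "0 < marg_snd Q y"
    using pmf_le_marg_snd[of Q x y] by linarith
  ultimately have "pmf Q (x, y) = marg_snd Q y * 2 powr (- (info_dev Q (x, y) + cond_entropy Q))"
    by (simp add: info_dev_def)
  then show ?case
    using Cons.IH[OF len \<open>0 < blockprob Q xs ys'\<close>]
    by (simp add: ys blockprob_snd_def powr_add[symmetric] algebra_simps)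
qed

lemma blockprob_snd_pos:
  fixes Q :: "('a::finite \<times> 'b::finite) pmf"
  shows "length xs = length ys \<Longrightarrow> 0 < blockprob Q xs ys \<Longrightarrow> 0 < blockprob_snd Q ys"
  using blockprob_eq_info_dev[of xs ys Q] blockprob_snd_nonneg[of Q ys]
  by (metis mult_eq_0_iff order_less_le)

lemma blockprob_bounds_small_dev:
  assumes "length xs = n" "length ys = n" "0 < blockprob Q xs ys"
    and "\<bar>pair_sum (info_dev Q) xs ys\<bar> < real n * \<delta>"
  shows "2 powr (- (real n * (cond_entropy Q + \<delta>))) * blockprob_snd Q ys \<le> blockprob Q xs ys"
    and "blockprob Q xs ys \<le> 2 powr (- (real n * (cond_entropy Q - \<delta>))) * blockprob_snd Q ys"
proof -
  note eq = blockprob_eq_info_dev[of xs ys Q]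
  have "0 \<le> blockprob_snd Q ys" by (rule blockprob_snd_nonneg)
  then show "2 powr (- (real n * (cond_entropy Q + \<delta>))) * blockprob_snd Q ys \<le> blockprob Q xs ys"
    and "blockprob Q xs ys \<le> 2 powr (- (real n * (cond_entropy Q - \<delta>))) * blockprob_snd Q ys"
    using assms eq by (auto intro!: mult_left_mono simp: mult.commute algebra_simps)
qed

lemma card_cond_typical:
  assumes "0 < T" and "0 < blockprob_snd Q ys"
  shows "real (card (cond_typical Q T ys)) \<le> 1 / T"
proof -
  let ?n = "length ys" and ?P = "blockprob_snd Q ys"
  have sub: "cond_typical Q T ys \<subseteq> {xs. length xs = ?n}"
    by (auto simp: cond_typical_def)
  have "real (card (cond_typical Q T ys)) * (T * ?P) = (\<Sum>xs\<in>cond_typical Q T ys. T * ?P)"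
    by simp
  also have "\<dots> \<le> (\<Sum>xs\<in>cond_typical Q T ys. blockprob Q xs ys)"
    by (rule sum_mono) (simp add: cond_typical_def)
  also have "\<dots> \<le> (\<Sum>xs\<in>{xs. length xs = ?n}. blockprob Q xs ys)"
    by (rule sum_mono2) (use sub in \<open>auto simp: blockprob_nonneg\<close>)
  also have "\<dots> = 1 * ?P"
    by (simp add: sum_blockprob_fst)
  finally show ?thesis
    using assms by (simp add: field_simps mult_le_cancel_right_pos)
qed

lemma prob_not_cond_typical:
  fixes Q :: "('a::finite \<times> 'b::finite) pmf"
  assumes "0 < n" and "0 < \<delta>"
  shows "prob_blocks Q n (\<lambda>xs ys. xs \<notin> cond_typical Q (2 powr (- (real n * (cond_entropy Q + \<delta>)))) ys)
    \<le> info_var Q / (real n * \<delta>\<^sup>2)"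
proof -
  have "prob_blocks Q n (\<lambda>xs ys. xs \<notin> cond_typical Q (2 powr (- (real n * (cond_entropy Q + \<delta>)))) ys)
      \<le> prob_blocks Q n (\<lambda>xs ys. real n * \<delta> \<le> \<bar>pair_sum (info_dev Q) xs ys\<bar>)"
    by (rule prob_blocks_mono)
      (use blockprob_bounds_small_dev(1) in \<open>force simp: cond_typical_def blocks_def\<close>)
  also have "\<dots> \<le> real n * info_var Q / (real n * \<delta>)\<^sup>2"
    unfolding info_var_def using assms by (intro prob_blocks_pair_sum_ge sum_info_dev) simp
  also have "\<dots> = info_var Q / (real n * \<delta>\<^sup>2)"
    using assms by (simp add: power2_eq_square)
  finally show ?thesis .
qed

subsection \<open>Random binning\<close>

definition bin_decode :: "('a \<Rightarrow> nat) \<Rightarrow> 'a set \<Rightarrow> nat \<Rightarrow> 'a" where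
  "bin_decode c S k = (SOME x. x \<in> S \<and> c x = k)"

lemma bin_decode_error_le:
  assumes "finite S"
  shows "(if bin_decode c S (c x) \<noteq> x then 1 else 0 :: real)
    \<le> (if x \<notin> S then 1 else 0) + (\<Sum>x'\<in>S - {x}. if c x' = c x then 1 else 0)"
proof (cases "x \<in> S \<and> (\<forall>x'\<in>S - {x}. c x' \<noteq> c x)")
  case True
  then have "bin_decode c S (c x) = x"
    unfolding bin_decode_def by (intro some_equality) auto
  then show ?thesis by (simp add: sum_nonneg)
next
  case False
  then consider "x \<notin> S" | x' where "x' \<in> S - {x}" "c x' = c x"
    by blast
  then show ?thesis
  proof cases
    case 2
    then have "(1::real) \<le> (\<Sum>x'\<in>S - {x}. if c x' = c x then 1 else 0)"
      using member_le_sum[of x' "S - {x}" "\<lambda>x'. if c x' = c x then 1 else (0::real)"] assms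
      by auto
    then show ?thesis by auto
  qed (simp add: sum_nonneg)
qed

lemma card_colorings_agree:
  assumes "finite D" "a \<in> D" "b \<in> D" "a \<noteq> b"
  shows "card {c \<in> PiE D (\<lambda>_. {..<K}). c a = c b} * K = card (PiE D (\<lambda>_. {..<K}))"
proof -
  let ?S = "{c \<in> PiE D (\<lambda>_. {..<K}). c a = c b}"
  let ?r = "\<lambda>c. restrict c (D - {b})"
  have "bij_betw ?r ?S (PiE (D - {b}) (\<lambda>_. {..<K}))"
  proof (rule bij_betw_byWitness[where f' = "\<lambda>d. d(b := d a)"])
    show "\<forall>c\<in>?S. (?r c)(b := ?r c a) = c"
    proof (intro ballI ext)
      fix c i assume "c \<in> ?S"
      then show "((?r c)(b := ?r c a)) i = c i"
        using assms by (cases "i \<in> D") (auto simp: PiE_def extensional_def)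
    qed
    show "\<forall>d\<in>PiE (D - {b}) (\<lambda>_. {..<K}). ?r (d(b := d a)) = d"
    proof (intro ballI ext)
      fix d i assume "d \<in> PiE (D - {b}) (\<lambda>_. {..<K})"
      then show "?r (d(b := d a)) i = d i"
        by (cases "i \<in> D - {b}") (auto simp: PiE_def extensional_def)
    qed
    show "?r ` ?S \<subseteq> PiE (D - {b}) (\<lambda>_. {..<K})"
    proof (rule image_subsetI)
      fix c assume "c \<in> ?S"
      then show "?r c \<in> PiE (D - {b}) (\<lambda>_. {..<K})"
        unfolding restrict_PiE_iff by (blast dest: PiE_mem)
    qed
    show "(\<lambda>d. d(b := d a)) ` PiE (D - {b}) (\<lambda>_. {..<K}) \<subseteq> ?S"
    proof (rule image_subsetI)
      fix d assume "d \<in> PiE (D - {b}) (\<lambda>_. {..<K})"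
      then have "\<forall>i\<in>D - {b}. d i < K" "d \<in> extensional (D - {b})"
        by (auto simp: PiE_def)
      then show "d(b := d a) \<in> ?S"
        using assms by (auto simp: PiE_def extensional_def)
    qed
  qed
  then have "card ?S = K ^ (card D - 1)"
    using assms by (simp add: bij_betw_same_card card_PiE)
  moreover have "card D \<noteq> 0"
    using assms by auto
  ultimately show ?thesis
    using assms by (simp add: card_PiE power_eq_if[of K "card D"])
qed

lemma sum_colorings_bin_decode_error:
  assumes "finite D" "x \<in> D" "S \<subseteq> D" "0 < K"
  shows "(\<Sum>c\<in>PiE D (\<lambda>_. {..<K}). if bin_decode c S (c x) \<noteq> x then 1 else 0 :: real)
    \<le> real (card (PiE D (\<lambda>_. {..<K}))) * ((if x \<notin> S then 1 else 0) + real (card S) / real K)"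
proof -
  let ?C = "PiE D (\<lambda>_. {..<K})"
  have finS: "finite S" using assms finite_subset by blast
  have agree: "(\<Sum>c\<in>?C. if c x' = c x then 1 else 0 :: real) = real (card ?C) / real K"
    if "x' \<in> S - {x}" for x'
  proof -
    have "(\<Sum>c\<in>?C. if c x' = c x then 1 else 0 :: real) = real (card {c \<in> ?C. c x' = c x})"
      using assms by (simp add: sum.If_cases Int_def finite_PiE)
    also have "\<dots> = real (card ?C) / real K"
      using card_colorings_agree[OF assms(1), of x' x K] that assms
      by (auto simp: field_simps simp flip: of_nat_mult)
    finally show ?thesis .
  qed
  have "(\<Sum>c\<in>?C. if bin_decode c S (c x) \<noteq> x then 1 else 0 :: real)
      \<le> (\<Sum>c\<in>?C. (if x \<notin> S then 1 else 0) + (\<Sum>x'\<in>S - {x}. if c x' = c x then 1 else 0))"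
    by (intro sum_mono bin_decode_error_le finS)
  also have "\<dots> = real (card ?C) * (if x \<notin> S then 1 else 0)
      + (\<Sum>c\<in>?C. \<Sum>x'\<in>S - {x}. if c x' = c x then 1 else 0)"
    by (simp add: sum.distrib)
  also have "\<dots> = real (card ?C) * (if x \<notin> S then 1 else 0) + real (card (S - {x})) * real (card ?C) / real K"
    by (simp add: sum.swap[of _ _ ?C] agree)
  also have "\<dots> \<le> real (card ?C) * (if x \<notin> S then 1 else 0) + real (card S) * real (card ?C) / real K"
    using finS by (intro add_left_mono divide_right_mono mult_right_mono) (auto intro: card_mono)
  finally show ?thesis by (simp add: algebra_simps)
qed

lemma sum_colorings_block_error:
  fixes Q :: "('a::finite \<times> 'b::finite) pmf" and n K :: nat
  defines "C \<equiv> PiE {xs :: 'a list. length xs = n} (\<lambda>_. {..<K})"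
  assumes "0 < K" "0 < T" "length xs = n" "length ys = n"
  shows "(\<Sum>c\<in>C. if bin_decode c (cond_typical Q T ys) (c xs) \<noteq> xs then blockprob Q xs ys else 0)
    \<le> real (card C) * ((if xs \<notin> cond_typical Q T ys then blockprob Q xs ys else 0)
      + blockprob Q xs ys / (T * real K))"
proof (cases "blockprob Q xs ys = 0")
  case False
  let ?S = "cond_typical Q T ys"
  have "0 < blockprob Q xs ys"
    using False by (simp add: order_less_le blockprob_nonneg)
  then have "0 < blockprob_snd Q ys"
    using assms by (intro blockprob_snd_pos[of xs]) auto
  then have "real (card ?S) / real K \<le> (1 / T) / real K"
    by (intro divide_right_mono card_cond_typical \<open>0 < T\<close>) auto
  moreover have "(\<Sum>c\<in>C. if bin_decode c ?S (c xs) \<noteq> xs then 1 else 0 :: real)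
      \<le> real (card C) * ((if xs \<notin> ?S then 1 else 0) + real (card ?S) / real K)"
    unfolding C_def using assms by (intro sum_colorings_bin_decode_error) (auto simp: cond_typical_def)
  ultimately have "(\<Sum>c\<in>C. if bin_decode c ?S (c xs) \<noteq> xs then 1 else 0 :: real)
      \<le> real (card C) * ((if xs \<notin> ?S then 1 else 0) + 1 / (T * real K))"
    by (smt (verit) divide_divide_eq_left mult_left_mono of_nat_0_le_iff)
  from mult_left_mono[OF this blockprob_nonneg[of Q xs ys]] show ?thesis
    by (cases "xs \<in> ?S") (simp_all add: sum_distrib_left algebra_simps if_distrib cong: if_cong)
qed (simp add: if_distrib cong: if_cong)

text \<open>Averaged over all binnings, the decoding error is at most the probability of atypicality plus
  the chance that some other typical candidate falls into the same bin.\<close>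
lemma average_binning_error:
  fixes Q :: "('a::finite \<times> 'b::finite) pmf" and n K :: nat
  defines "C \<equiv> PiE {xs :: 'a list. length xs = n} (\<lambda>_. {..<K})"
  assumes "0 < K" "0 < T"
  shows "(\<Sum>c\<in>C. prob_blocks Q n (\<lambda>xs ys. bin_decode c (cond_typical Q T ys) (c xs) \<noteq> xs))
    \<le> real (card C) * (prob_blocks Q n (\<lambda>xs ys. xs \<notin> cond_typical Q T ys) + 1 / (T * real K))"
proof -
  let ?S = "cond_typical Q T"
  have "(\<Sum>c\<in>C. prob_blocks Q n (\<lambda>xs ys. bin_decode c (?S ys) (c xs) \<noteq> xs))
      = (\<Sum>(xs, ys)\<in>blocks n. \<Sum>c\<in>C. if bin_decode c (?S ys) (c xs) \<noteq> xs then blockprob Q xs ys else 0)"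
    unfolding prob_blocks_def case_prod_unfold by (rule sum.swap)
  also have "\<dots> \<le> (\<Sum>(xs, ys)\<in>blocks n. real (card C) *
      ((if xs \<notin> ?S ys then blockprob Q xs ys else 0) + blockprob Q xs ys / (T * real K)))"
  proof (intro sum_mono, clarify)
    fix xs :: "'a list" and ys :: "'b list"
    assume "(xs, ys) \<in> blocks n"
    then show "(\<Sum>c\<in>C. if bin_decode c (?S ys) (c xs) \<noteq> xs then blockprob Q xs ys else 0)
        \<le> real (card C) * ((if xs \<notin> ?S ys then blockprob Q xs ys else 0) + blockprob Q xs ys / (T * real K))"
      unfolding C_def using assms(2,3) by (intro sum_colorings_block_error) (auto simp: blocks_def)
  qed
  also have "\<dots> = real (card C) * (prob_blocks Q n (\<lambda>xs ys. xs \<notin> ?S ys)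
      + (\<Sum>(xs, ys)\<in>blocks n. blockprob Q xs ys) / (T * real K))"
    by (simp add: prob_blocks_def sum_distrib_left[symmetric] sum.distrib case_prod_unfold
        sum_divide_distrib)
  finally show ?thesis
    by (simp add: sum_blockprob)
qed

lemma binning_code:
  fixes Q :: "('a::finite \<times> 'b::finite) pmf"
  assumes "0 < K" "0 < n" "0 < \<delta>"
  shows "\<exists>(c :: 'a list \<Rightarrow> nat) (d :: nat \<Rightarrow> 'b list \<Rightarrow> 'a list). (\<forall>xs. length xs = n \<longrightarrow> c xs < K) \<and>
    prob_blocks Q n (\<lambda>xs ys. d (c xs) ys \<noteq> xs)
      \<le> info_var Q / (real n * \<delta>\<^sup>2) + 2 powr (real n * (cond_entropy Q + \<delta>)) / real K"
proof -
  define T where "T = 2 powr (- (real n * (cond_entropy Q + \<delta>)))"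
  define C where "C = PiE {xs :: 'a list. length xs = n} (\<lambda>_. {..<K})"
  have "0 < T" by (simp add: T_def)
  have "finite C" by (simp add: C_def finite_PiE)
  moreover have "C \<noteq> {}" using \<open>0 < K\<close> by (auto simp: C_def PiE_eq_empty_iff)
  ultimately obtain c where "c \<in> C"
    and c: "prob_blocks Q n (\<lambda>xs ys. bin_decode c (cond_typical Q T ys) (c xs) \<noteq> xs)
      \<le> prob_blocks Q n (\<lambda>xs ys. xs \<notin> cond_typical Q T ys) + 1 / (T * real K)"
    using exists_le_average[OF _ _ average_binning_error[OF \<open>0 < K\<close> \<open>0 < T\<close>, of Q n]]
    unfolding C_def by blast
  moreover have "prob_blocks Q n (\<lambda>xs ys. xs \<notin> cond_typical Q T ys) \<le> info_var Q / (real n * \<delta>\<^sup>2)"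
    unfolding T_def by (rule prob_not_cond_typical[OF assms(2,3)])
  moreover have "1 / (T * real K) = 2 powr (real n * (cond_entropy Q + \<delta>)) / real K"
    unfolding T_def powr_minus by (simp add: divide_inverse)
  moreover have "\<forall>xs. length xs = n \<longrightarrow> c xs < K"
    using \<open>c \<in> C\<close> by (auto simp: C_def PiE_iff)
  ultimately show ?thesis
    by (intro exI[of _ c] exI[of _ "\<lambda>k ys. bin_decode c (cond_typical Q T ys) k"]) auto
qed

lemma eventually_binning_code:
  fixes Q :: "('a::finite \<times> 'b::finite) pmf"
  assumes "0 < \<delta>" and "0 < \<epsilon>"
  shows "eventually (\<lambda>n. \<exists>(c :: 'a list \<Rightarrow> nat) (d :: nat \<Rightarrow> 'b list \<Rightarrow> 'a list).
    (\<forall>xs. length xs = n \<longrightarrow> c xs < nat \<lceil>2 powr (real n * (cond_entropy Q + 2 * \<delta>))\<rceil>) \<and>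
    prob_blocks Q n (\<lambda>xs ys. d (c xs) ys \<noteq> xs) \<le> \<epsilon>) sequentially"
proof -
  have "eventually (\<lambda>n. 0 < n \<and> info_var Q / \<delta>\<^sup>2 / real n \<le> \<epsilon> / 2
      \<and> 1 / (\<delta> * ln 2) / real n \<le> \<epsilon> / 2) sequentially"
    using assms by (intro eventually_conj eventually_const_div_le) (auto simp: eventually_gt_at_top)
  then show ?thesis
  proof (rule eventually_mono, elim conjE)
    fix n :: nat
    assume "0 < n" and var: "info_var Q / \<delta>\<^sup>2 / real n \<le> \<epsilon> / 2"
      and exp: "1 / (\<delta> * ln 2) / real n \<le> \<epsilon> / 2"
    define P where "P = 2 powr (real n * (cond_entropy Q + 2 * \<delta>))"
    define K where "K = nat \<lceil>P\<rceil>"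
    have "1 \<le> P"
      unfolding P_def using cond_entropy_nonneg[of Q] \<open>0 < \<delta>\<close> by (intro ge_one_powr_ge_zero) auto
    then have "P \<le> real K" "0 < K"
      unfolding K_def using real_nat_ceiling_ge[of P] by linarith+
    obtain c d where c: "\<forall>xs. length xs = n \<longrightarrow> c xs < K"
      and d: "prob_blocks Q n (\<lambda>xs ys. d (c xs) ys \<noteq> xs)
        \<le> info_var Q / (real n * \<delta>\<^sup>2) + 2 powr (real n * (cond_entropy Q + \<delta>)) / real K"
      using binning_code[OF \<open>0 < K\<close> \<open>0 < n\<close> \<open>0 < \<delta>\<close>, of Q] by blast
    have "2 powr (real n * (cond_entropy Q + \<delta>)) / real K \<le> 2 powr (real n * (cond_entropy Q + \<delta>)) / P"
      using \<open>P \<le> real K\<close> \<open>1 \<le> P\<close> by (intro divide_left_mono) auto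
    also have "\<dots> = 2 powr (- (real n * \<delta>))"
      unfolding P_def by (simp add: powr_diff[symmetric] algebra_simps)
    also have "\<dots> \<le> 1 / (\<delta> * ln 2) / real n"
      using two_powr_neg_le[of "real n * \<delta>"] \<open>0 < n\<close> \<open>0 < \<delta>\<close> by (simp add: field_simps)
    finally have "2 powr (real n * (cond_entropy Q + \<delta>)) / real K \<le> 1 / (\<delta> * ln 2) / real n" .
    moreover have "info_var Q / (real n * \<delta>\<^sup>2) = info_var Q / \<delta>\<^sup>2 / real n"
      by simp
    ultimately have "prob_blocks Q n (\<lambda>xs ys. d (c xs) ys \<noteq> xs) \<le> \<epsilon>"
      using d var exp by linarith
    then show "\<exists>c d. (\<forall>xs. length xs = n \<longrightarrow> c xs < nat \<lceil>2 powr (real n * (cond_entropy Q + 2 * \<delta>))\<rceil>) \<and>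
        prob_blocks Q n (\<lambda>xs ys. d (c xs) ys \<noteq> xs) \<le> \<epsilon>"
      using c unfolding K_def P_def by blast
  qed
qed

lemma sum_blockprob_snd:
  "(\<Sum>ys\<in>{ys. length ys = n}. blockprob_snd (Q :: ('a::finite \<times> 'b::finite) pmf) ys) = 1"
proof -
  have "(\<Sum>ys\<in>{ys. length ys = n}. blockprob_snd Q ys)
      = (\<Sum>ys\<in>{ys. length ys = n}. \<Sum>xs\<in>{xs :: 'a list. length xs = n}. blockprob Q xs ys)"
    by (simp add: sum_blockprob_fst)
  also have "\<dots> = (\<Sum>(xs, ys)\<in>blocks n. blockprob Q xs ys)"
    unfolding blocks_eq sum.cartesian_product' by (subst sum.swap) simp
  finally show ?thesis by (simp add: sum_blockprob)
qed

text \<open>For a fixed side information \<open>ys\<close>, the decoder can output at most \<open>card M\<close> different blocks.\<close>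
lemma prob_blocks_decoded_unlikely:
  fixes Q :: "('a::finite \<times> 'b::finite) pmf" and d :: "'k \<Rightarrow> 'b list \<Rightarrow> 'a list"
  assumes "finite M" "\<forall>(xs, ys)\<in>blocks n. e xs ys \<in> M" "0 \<le> T"
  shows "prob_blocks Q n (\<lambda>xs ys. d (e xs ys) ys = xs \<and> blockprob Q xs ys \<le> T * blockprob_snd Q ys)
    \<le> T * real (card M)"
proof -
  have ind: "(\<Sum>xs\<in>{xs :: 'a list. length xs = n}. if xs \<in> (\<lambda>k. d k ys) ` M then 1 else 0 :: real)
      \<le> real (card M)" for ys
  proof -
    have "(\<Sum>xs\<in>{xs :: 'a list. length xs = n}. if xs \<in> (\<lambda>k. d k ys) ` M then 1 else 0 :: real)
        = real (card ({xs. length xs = n} \<inter> (\<lambda>k. d k ys) ` M))"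
      by (simp add: sum.If_cases)
    also have "\<dots> \<le> real (card ((\<lambda>k. d k ys) ` M))"
      using assms(1) by (intro of_nat_mono card_mono) auto
    also have "\<dots> \<le> real (card M)"
      using assms(1) by (simp add: card_image_le)
    finally show ?thesis .
  qed
  have "prob_blocks Q n (\<lambda>xs ys. d (e xs ys) ys = xs \<and> blockprob Q xs ys \<le> T * blockprob_snd Q ys)
      \<le> (\<Sum>(xs, ys)\<in>blocks n. T * blockprob_snd Q ys * (if xs \<in> (\<lambda>k. d k ys) ` M then 1 else 0))"
    unfolding prob_blocks_def
  proof (intro sum_mono, clarify)
    fix xs :: "'a list" and ys :: "'b list"
    assume "(xs, ys) \<in> blocks n"
    then have "e xs ys \<in> M" using assms(2) by auto
    then show "(if d (e xs ys) ys = xs \<and> blockprob Q xs ys \<le> T * blockprob_snd Q ys then blockprob Q xs ys else 0)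
        \<le> T * blockprob_snd Q ys * (if xs \<in> (\<lambda>k. d k ys) ` M then 1 else 0)"
      using assms(3) blockprob_snd_nonneg[of Q ys] by (auto intro: rev_image_eqI)
  qed
  also have "\<dots> = (\<Sum>ys\<in>{ys. length ys = n}. T * blockprob_snd Q ys *
      (\<Sum>xs\<in>{xs :: 'a list. length xs = n}. if xs \<in> (\<lambda>k. d k ys) ` M then 1 else 0))"
    unfolding blocks_eq sum.cartesian_product' sum_distrib_left by (subst sum.swap) simp
  also have "\<dots> \<le> (\<Sum>ys\<in>{ys. length ys = n}. T * blockprob_snd Q ys * real (card M))"
    using ind assms(3) by (intro sum_mono mult_left_mono) (auto simp: blockprob_snd_nonneg)
  also have "\<dots> = T * real (card M)"
    by (simp add: sum_distrib_left[symmetric] sum_distrib_right[symmetric] sum_blockprob_snd)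
  finally show ?thesis .
qed

lemma prob_blocks_decoded_le:
  fixes Q :: "('a::finite \<times> 'b::finite) pmf" and d :: "'k \<Rightarrow> 'b list \<Rightarrow> 'a list"
  assumes "0 < n" "0 < \<delta>" "finite M" "\<forall>(xs, ys)\<in>blocks n. e xs ys \<in> M"
  shows "prob_blocks Q n (\<lambda>xs ys. d (e xs ys) ys = xs)
    \<le> info_var Q / (real n * \<delta>\<^sup>2) + real (card M) * 2 powr (- (real n * (cond_entropy Q - \<delta>)))"
proof -
  define T where "T = 2 powr (- (real n * (cond_entropy Q - \<delta>)))"
  let ?dev = "\<lambda>xs ys. real n * \<delta> \<le> \<bar>pair_sum (info_dev Q) xs ys\<bar>"
  let ?hit = "\<lambda>xs ys. d (e xs ys) ys = xs \<and> blockprob Q xs ys \<le> T * blockprob_snd Q ys"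
  have "prob_blocks Q n (\<lambda>xs ys. d (e xs ys) ys = xs) \<le> prob_blocks Q n (\<lambda>xs ys. ?dev xs ys \<or> ?hit xs ys)"
  proof (rule prob_blocks_mono)
    fix xs ys
    assume b: "(xs, ys) \<in> blocks n" and pos: "0 < blockprob Q xs ys" and ok: "d (e xs ys) ys = xs"
    have len: "length xs = n" "length ys = n"
      using b by (auto simp: blocks_def)
    show "?dev xs ys \<or> ?hit xs ys"
    proof (cases "?dev xs ys")
      case False
      then have "blockprob Q xs ys \<le> T * blockprob_snd Q ys"
        unfolding T_def using blockprob_bounds_small_dev(2)[OF len pos] by simp
      then show ?thesis using ok by simp
    qed simp
  qed
  also have "\<dots> \<le> prob_blocks Q n ?dev + prob_blocks Q n ?hit"
    by (rule prob_blocks_disj)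
  also have "prob_blocks Q n ?dev \<le> real n * info_var Q / (real n * \<delta>)\<^sup>2"
    unfolding info_var_def using assms(1,2) by (intro prob_blocks_pair_sum_ge sum_info_dev) simp
  also have "\<dots> = info_var Q / (real n * \<delta>\<^sup>2)"
    using assms(1) by (simp add: power2_eq_square)
  also have "prob_blocks Q n ?hit \<le> T * real (card M)"
    by (rule prob_blocks_decoded_unlikely[OF assms(3,4)]) (simp add: T_def)
  finally show ?thesis
    by (simp add: T_def mult.commute)
qed

lemma eventually_decoding_unreliable:
  fixes Q :: "('a::finite \<times> 'b::finite) pmf"
  assumes "0 < \<gamma>"
  shows "eventually (\<lambda>n. \<forall>(M :: 'k set) (e :: 'a list \<Rightarrow> 'b list \<Rightarrow> 'k) (d :: 'k \<Rightarrow> 'b list \<Rightarrow> 'a list).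
      finite M \<longrightarrow> (\<forall>(xs, ys)\<in>blocks n. e xs ys \<in> M) \<longrightarrow>
      real (card M) \<le> 2 powr (real n * (cond_entropy Q - \<gamma>)) \<longrightarrow>
      prob_blocks Q n (\<lambda>xs ys. d (e xs ys) ys = xs) \<le> 1 / 2) sequentially"
proof -
  define \<delta> where "\<delta> = \<gamma> / 2"
  have "0 < \<delta>" using assms by (simp add: \<delta>_def)
  have "eventually (\<lambda>n. 0 < n \<and> info_var Q / \<delta>\<^sup>2 / real n \<le> 1 / 4
      \<and> 1 / (\<delta> * ln 2) / real n \<le> 1 / 4) sequentially"
    by (intro eventually_conj eventually_const_div_le) (auto simp: eventually_gt_at_top)
  then show ?thesis
  proof (rule eventually_mono, elim conjE, intro allI impI)
    fix n :: nat and M :: "'k set" and e :: "'a list \<Rightarrow> 'b list \<Rightarrow> 'k" and d :: "'k \<Rightarrow> 'b list \<Rightarrow> 'a list"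
    assume "0 < n" and var: "info_var Q / \<delta>\<^sup>2 / real n \<le> 1 / 4"
      and exp: "1 / (\<delta> * ln 2) / real n \<le> 1 / 4" and "finite M"
      and e: "\<forall>(xs, ys)\<in>blocks n. e xs ys \<in> M"
      and M: "real (card M) \<le> 2 powr (real n * (cond_entropy Q - \<gamma>))"
    have "real (card M) * 2 powr (- (real n * (cond_entropy Q - \<delta>)))
        \<le> 2 powr (real n * (cond_entropy Q - \<gamma>)) * 2 powr (- (real n * (cond_entropy Q - \<delta>)))"
      using M by (intro mult_right_mono) auto
    also have "\<dots> = 2 powr (- (real n * \<delta>))"
      by (simp add: \<delta>_def powr_add[symmetric] algebra_simps)
    also have "\<dots> \<le> 1 / (\<delta> * ln 2) / real n"
      using two_powr_neg_le[of "real n * \<delta>"] \<open>0 < n\<close> \<open>0 < \<delta>\<close> by (simp add: field_simps)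
    moreover have "info_var Q / (real n * \<delta>\<^sup>2) = info_var Q / \<delta>\<^sup>2 / real n"
      by simp
    ultimately show "prob_blocks Q n (\<lambda>xs ys. d (e xs ys) ys = xs) \<le> 1 / 2"
      using prob_blocks_decoded_le[OF \<open>0 < n\<close> \<open>0 < \<delta>\<close> \<open>finite M\<close> e, of Q d] var exp
      by linarith
  qed
qed

lemma marg_nonneg: "(\<And>\<omega>. \<omega> \<in> \<Omega> \<Longrightarrow> 0 \<le> p \<omega>) \<Longrightarrow> 0 \<le> marg \<Omega> p h v"
  unfolding marg_def by (rule sum_nonneg) auto

lemma marg_pos:
  assumes "finite \<Omega>" "\<And>\<omega>. \<omega> \<in> \<Omega> \<Longrightarrow> 0 \<le> p \<omega>" "\<omega> \<in> \<Omega>" "0 < p \<omega>"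
  shows "0 < marg \<Omega> p h (h \<omega>)"
proof -
  have "p \<omega> \<le> marg \<Omega> p h (h \<omega>)"
    unfolding marg_def using assms by (intro member_le_sum) auto
  then show ?thesis using assms(4) by linarith
qed

lemma sum_eq_sum_marg:
  assumes "finite \<Omega>"
  shows "(\<Sum>\<omega>\<in>\<Omega>. p \<omega> * f (h \<omega>)) = (\<Sum>v\<in>h ` \<Omega>. marg \<Omega> p h v * f v)"
  unfolding marg_def sum.image_gen[OF assms, of "\<lambda>\<omega>. p \<omega> * f (h \<omega>)" h]
  by (intro sum.cong) (auto simp: sum_distrib_right)

lemma sum_marg_pair:
  assumes "finite \<Omega>"
  shows "(\<Sum>f\<in>F ` \<Omega>. marg \<Omega> p (\<lambda>w. (F w, G w)) (f, g)) = marg \<Omega> p G g"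
proof -
  let ?S = "{\<omega>\<in>\<Omega>. G \<omega> = g}"
  have "marg \<Omega> p G g = (\<Sum>f\<in>F ` ?S. \<Sum>\<omega>\<in>{\<omega>\<in>?S. F \<omega> = f}. p \<omega>)"
    unfolding marg_def using assms by (intro sum.image_gen) simp
  also have "\<dots> = (\<Sum>f\<in>F ` ?S. marg \<Omega> p (\<lambda>w. (F w, G w)) (f, g))"
    unfolding marg_def by (intro sum.cong refl) auto
  also have "\<dots> = (\<Sum>f\<in>F ` \<Omega>. marg \<Omega> p (\<lambda>w. (F w, G w)) (f, g))"
  proof (rule sum.mono_neutral_left)
    show "\<forall>f\<in>F ` \<Omega> - F ` ?S. marg \<Omega> p (\<lambda>w. (F w, G w)) (f, g) = 0"
      unfolding marg_def by (force simp: image_iff intro!: sum.neutral)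
  qed (use assms in auto)
  finally show ?thesis by simp
qed

lemma cond_ent_nonneg:
  assumes "finite \<Omega>" and nonneg: "\<And>\<omega>. \<omega> \<in> \<Omega> \<Longrightarrow> 0 \<le> p \<omega>"
  shows "0 \<le> cond_ent \<Omega> p F G"
proof -
  have "p \<omega> * log 2 (marg \<Omega> p (\<lambda>w. (F w, G w)) (F \<omega>, G \<omega>) / marg \<Omega> p G (G \<omega>)) \<le> 0"
    if "\<omega> \<in> \<Omega>" for \<omega>
  proof (cases "p \<omega> = 0")
    case False
    then have "0 < p \<omega>" using nonneg[OF that] by simp
    moreover have "0 < marg \<Omega> p (\<lambda>w. (F w, G w)) (F \<omega>, G \<omega>)"
      using marg_pos[of \<Omega> p \<omega> "\<lambda>w. (F w, G w)"] assms that \<open>0 < p \<omega>\<close> by simp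
    moreover have "marg \<Omega> p (\<lambda>w. (F w, G w)) (F \<omega>, G \<omega>) \<le> marg \<Omega> p G (G \<omega>)"
      unfolding marg_def using assms by (intro sum_mono2) auto
    ultimately show ?thesis by (simp add: mult_nonneg_nonpos divide_le_eq_1)
  qed simp
  then show ?thesis unfolding cond_ent_def by (simp add: sum_nonpos)
qed

text \<open>The product \<open>P(f, g) P(h, g) / P(g)\<close> of the two conditional laws given \<open>G\<close> has total mass at most 1.\<close>
lemma sum_cond_product_le:
  fixes p :: "'w \<Rightarrow> real" and F :: "'w \<Rightarrow> 'f" and H :: "'w \<Rightarrow> 'h" and G :: "'w \<Rightarrow> 'g"
  assumes fin: "finite \<Omega>" and nonneg: "\<And>\<omega>. \<omega> \<in> \<Omega> \<Longrightarrow> 0 \<le> p \<omega>"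
  defines "mFG \<equiv> marg \<Omega> p (\<lambda>w. (F w, G w))" and "mHG \<equiv> marg \<Omega> p (\<lambda>w. (H w, G w))"
    and "mG \<equiv> marg \<Omega> p G" and "mFHG \<equiv> marg \<Omega> p (\<lambda>w. (F w, H w, G w))"
  shows "(\<Sum>\<omega>\<in>\<Omega>. p \<omega> * (mFG (F \<omega>, G \<omega>) * mHG (H \<omega>, G \<omega>) / (mG (G \<omega>) * mFHG (F \<omega>, H \<omega>, G \<omega>))))
    \<le> (\<Sum>\<omega>\<in>\<Omega>. p \<omega>)"
proof -
  let ?k = "\<lambda>w. (F w, H w, G w)"
  define q where "q = (\<lambda>(f, h, g). mFG (f, g) * mHG (h, g) / mG g)"
  have q_nonneg: "0 \<le> q v" for v
    by (cases v) (simp add: q_def mFG_def mHG_def mG_def marg_nonneg nonneg)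
  have "(\<Sum>\<omega>\<in>\<Omega>. p \<omega> * (mFG (F \<omega>, G \<omega>) * mHG (H \<omega>, G \<omega>) / (mG (G \<omega>) * mFHG (F \<omega>, H \<omega>, G \<omega>))))
      = (\<Sum>v\<in>?k ` \<Omega>. mFHG v * (q v / mFHG v))"
    using sum_eq_sum_marg[OF fin, of p "\<lambda>v. q v / mFHG v" ?k]
    by (simp add: mFHG_def q_def)
  also have "\<dots> \<le> (\<Sum>v\<in>?k ` \<Omega>. q v)"
    by (intro sum_mono) (simp add: q_nonneg)
  also have "\<dots> \<le> (\<Sum>v\<in>F ` \<Omega> \<times> H ` \<Omega> \<times> G ` \<Omega>. q v)"
    using fin q_nonneg by (intro sum_mono2) auto
  also have "\<dots> = (\<Sum>f\<in>F ` \<Omega>. \<Sum>h\<in>H ` \<Omega>. \<Sum>g\<in>G ` \<Omega>. mFG (f, g) * mHG (h, g) / mG g)"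
    by (simp add: sum.cartesian_product' q_def)
  also have "\<dots> = (\<Sum>g\<in>G ` \<Omega>. \<Sum>f\<in>F ` \<Omega>. \<Sum>h\<in>H ` \<Omega>. mFG (f, g) * mHG (h, g) / mG g)"
    by (subst sum.swap) (rule sum.cong[OF refl], rule sum.swap)
  also have "\<dots> = (\<Sum>g\<in>G ` \<Omega>. (\<Sum>f\<in>F ` \<Omega>. mFG (f, g)) * (\<Sum>h\<in>H ` \<Omega>. mHG (h, g)) / mG g)"
    by (simp add: sum_product sum_divide_distrib)
  also have "\<dots> = (\<Sum>g\<in>G ` \<Omega>. mG g)"
    unfolding mFG_def mHG_def mG_def sum_marg_pair[OF fin] by (intro sum.cong) auto
  also have "\<dots> = (\<Sum>\<omega>\<in>\<Omega>. p \<omega>)"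
    using sum_eq_sum_marg[OF fin, of p "\<lambda>_. 1" G] by (simp add: mG_def)
  finally show ?thesis .
qed

lemma neg_log2_ge: "0 < r \<Longrightarrow> (1 - r) / ln 2 \<le> - log 2 r"
  using ln_le_minus_one[of r] divide_right_mono[of "1 - r" "- ln r" "ln 2"] by (simp add: log_def)

lemma cond_ent_mono:
  assumes fin: "finite \<Omega>" and nonneg: "\<And>\<omega>. \<omega> \<in> \<Omega> \<Longrightarrow> 0 \<le> p \<omega>"
  shows "cond_ent \<Omega> p F (\<lambda>w. (H w, G w)) \<le> cond_ent \<Omega> p F G"
proof -
  define mFG where "mFG = marg \<Omega> p (\<lambda>w. (F w, G w))"
  define mHG where "mHG = marg \<Omega> p (\<lambda>w. (H w, G w))"
  define mG where "mG = marg \<Omega> p G"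
  define mFHG where "mFHG = marg \<Omega> p (\<lambda>w. (F w, H w, G w))"
  define R where "R \<omega> = mFG (F \<omega>, G \<omega>) * mHG (H \<omega>, G \<omega>) / (mG (G \<omega>) * mFHG (F \<omega>, H \<omega>, G \<omega>))" for \<omega>
  have pointwise: "p \<omega> * (1 - R \<omega>) / ln 2
      \<le> p \<omega> * (log 2 (mFHG (F \<omega>, H \<omega>, G \<omega>) / mHG (H \<omega>, G \<omega>)) - log 2 (mFG (F \<omega>, G \<omega>) / mG (G \<omega>)))"
    if "\<omega> \<in> \<Omega>" for \<omega>
  proof (cases "p \<omega> = 0")
    case False
    then have "0 < p \<omega>" using nonneg[OF that] by simp
    then have pos: "0 < mFG (F \<omega>, G \<omega>)" "0 < mHG (H \<omega>, G \<omega>)" "0 < mG (G \<omega>)" "0 < mFHG (F \<omega>, H \<omega>, G \<omega>)"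
      unfolding mFG_def mHG_def mG_def mFHG_def
      using marg_pos[OF fin nonneg that] by fastforce+
    then have "log 2 (mFHG (F \<omega>, H \<omega>, G \<omega>) / mHG (H \<omega>, G \<omega>)) - log 2 (mFG (F \<omega>, G \<omega>) / mG (G \<omega>))
        = - log 2 (R \<omega>)"
      by (simp add: R_def log_divide_pos log_mult_pos)
    moreover have "(1 - R \<omega>) / ln 2 \<le> - log 2 (R \<omega>)"
      using pos by (intro neg_log2_ge) (simp add: R_def)
    ultimately show ?thesis
      using mult_left_mono[of "(1 - R \<omega>) / ln 2" "- log 2 (R \<omega>)" "p \<omega>"] \<open>0 < p \<omega>\<close> by simp
  qed simp
  have "0 \<le> ((\<Sum>\<omega>\<in>\<Omega>. p \<omega>) - (\<Sum>\<omega>\<in>\<Omega>. p \<omega> * R \<omega>)) / ln 2"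
    using sum_cond_product_le[OF fin nonneg, where F = F and H = H and G = G]
    by (simp add: R_def mFG_def mHG_def mG_def mFHG_def)
  also have "\<dots> = (\<Sum>\<omega>\<in>\<Omega>. p \<omega> * (1 - R \<omega>) / ln 2)"
    by (simp add: sum_divide_distrib[symmetric] sum_subtractf[symmetric] algebra_simps)
  also have "\<dots> \<le> (\<Sum>\<omega>\<in>\<Omega>. p \<omega> * (log 2 (mFHG (F \<omega>, H \<omega>, G \<omega>) / mHG (H \<omega>, G \<omega>))
      - log 2 (mFG (F \<omega>, G \<omega>) / mG (G \<omega>))))"
    using pointwise by (rule sum_mono)
  finally show ?thesis
    unfolding cond_ent_def mFG_def mHG_def mG_def mFHG_def
    by (simp add: sum_subtractf algebra_simps)
qed

lemma marg_reindex:
  assumes "bij_betw \<sigma> \<Omega>' \<Omega>"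
  shows "marg \<Omega>' (\<lambda>\<omega>. p (\<sigma> \<omega>)) (\<lambda>\<omega>. h (\<sigma> \<omega>)) v = marg \<Omega> p h v"
proof -
  have "inj_on \<sigma> {\<omega>\<in>\<Omega>'. h (\<sigma> \<omega>) = v}"
    using assms by (auto simp: bij_betw_def intro: inj_on_subset)
  moreover have "\<sigma> ` {\<omega>\<in>\<Omega>'. h (\<sigma> \<omega>) = v} = {\<omega>\<in>\<Omega>. h \<omega> = v}"
    using assms by (auto simp: bij_betw_def)
  ultimately show ?thesis
    unfolding marg_def using sum.reindex[of \<sigma> "{\<omega>\<in>\<Omega>'. h (\<sigma> \<omega>) = v}" p] by simp
qed

lemma cond_ent_reindex:
  assumes "bij_betw \<sigma> \<Omega>' \<Omega>"
  shows "cond_ent \<Omega>' (\<lambda>\<omega>. p (\<sigma> \<omega>)) (\<lambda>\<omega>. F (\<sigma> \<omega>)) (\<lambda>\<omega>. G (\<sigma> \<omega>)) = cond_ent \<Omega> p F G"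
  unfolding cond_ent_def
  using marg_reindex[OF assms, of p "\<lambda>w. (F w, G w)"] marg_reindex[OF assms, of p G]
    sum.reindex_bij_betw[OF assms,
      of "\<lambda>\<omega>. p \<omega> * log 2 (marg \<Omega> p (\<lambda>w. (F w, G w)) (F \<omega>, G \<omega>) / marg \<Omega> p G (G \<omega>))"]
  by simp

subsection \<open>The region \<open>\<Union>p. Rss p\<close> in terms of the two conditional entropies\<close>

definition aux_a :: "nat \<times> nat \<times> 'x \<times> 'y \<Rightarrow> nat" where "aux_a = (\<lambda>(a, b, x, y). a)"
definition aux_b :: "nat \<times> nat \<times> 'x \<times> 'y \<Rightarrow> nat" where "aux_b = (\<lambda>(a, b, x, y). b)"
definition src_x :: "nat \<times> nat \<times> 'x \<times> 'y \<Rightarrow> 'x" where "src_x = (\<lambda>(a, b, x, y). x)"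
definition src_y :: "nat \<times> nat \<times> 'x \<times> 'y \<Rightarrow> 'y" where "src_y = (\<lambda>(a, b, x, y). y)"

lemma projections_simps [simp]:
  "aux_a (a, b, z) = a" "aux_b (a, b, z) = b" "src_x (a, b, z) = fst z" "src_y (a, b, z) = snd z"
  by (simp_all add: aux_a_def aux_b_def src_x_def src_y_def case_prod_unfold)

lemma Rss_eq:
  fixes p :: "nat \<times> nat \<times> 'x::finite \<times> 'y::finite \<Rightarrow> real"
  shows "Rss p = {(R0, R1, R2).
    R0 \<ge> max (cond_ent (Omega TYPE('x) TYPE('y)) p src_x (\<lambda>w. (aux_a w, src_y w)))
              (cond_ent (Omega TYPE('x) TYPE('y)) p src_y (\<lambda>w. (aux_b w, src_x w))) \<and>
    R1 \<ge> cond_mi (Omega TYPE('x) TYPE('y)) p src_x aux_a src_y \<and>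
    R2 \<ge> cond_mi (Omega TYPE('x) TYPE('y)) p src_y aux_b src_x}"
  unfolding Rss_def Let_def aux_a_def aux_b_def src_x_def src_y_def ..

lemma finite_Omega [simp]: "finite (Omega TYPE('x::finite) TYPE('y::finite))"
  by (simp add: Omega_def)

lemma mem_Omega:
  "(a, b, x, y) \<in> Omega TYPE('x) TYPE('y) \<longleftrightarrow> a < aux_card TYPE('x) TYPE('y) \<and> b < aux_card TYPE('x) TYPE('y)"
  for x :: 'x and y :: 'y
  by (simp add: Omega_def)

lemma sum_Omega:
  "(\<Sum>\<omega>\<in>Omega TYPE('x::finite) TYPE('y::finite). f \<omega>) =
   (\<Sum>z\<in>UNIV. \<Sum>(a, b)\<in>{..<aux_card TYPE('x) TYPE('y)} \<times> {..<aux_card TYPE('x) TYPE('y)}. f (a, b, z))"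
proof -
  let ?A = "{..<aux_card TYPE('x) TYPE('y)}"
  have "(\<Sum>\<omega>\<in>Omega TYPE('x) TYPE('y). f \<omega>) = (\<Sum>a\<in>?A. \<Sum>b\<in>?A. \<Sum>z\<in>UNIV. f (a, b, z))"
    unfolding Omega_def
    by (simp add: sum.cartesian_product' UNIV_Times_UNIV[symmetric] del: UNIV_Times_UNIV)
  also have "\<dots> = (\<Sum>z\<in>UNIV. \<Sum>a\<in>?A. \<Sum>b\<in>?A. f (a, b, z))"
    by (subst sum.swap) (rule sum.cong[OF refl], rule sum.swap)
  finally show ?thesis
    by (simp add: sum.cartesian_product')
qed

lemma Pss_nonneg: "p \<in> Pss Q \<Longrightarrow> \<omega> \<in> Omega TYPE('x) TYPE('y) \<Longrightarrow> 0 \<le> p \<omega>"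
  for p :: "nat \<times> nat \<times> 'x::finite \<times> 'y::finite \<Rightarrow> real"
  unfolding Pss_def by blast

lemma sum_Pss_src:
  fixes p :: "nat \<times> nat \<times> 'x::finite \<times> 'y::finite \<Rightarrow> real"
  assumes "p \<in> Pss Q"
  shows "(\<Sum>\<omega>\<in>Omega TYPE('x) TYPE('y). p \<omega> * f (src_x \<omega>, src_y \<omega>)) = (\<Sum>z\<in>UNIV. pmf Q z * f z)"
proof -
  let ?K = "aux_card TYPE('x) TYPE('y)"
  have "(\<Sum>(a, b)\<in>{..<?K} \<times> {..<?K}. p (a, b, z) * f (src_x (a, b, z), src_y (a, b, z))) = pmf Q z * f z"
    for z :: "'x \<times> 'y"
  proof (cases z)
    case (Pair x y)
    have "(\<Sum>(a, b)\<in>{..<?K} \<times> {..<?K}. p (a, b, x, y)) = pmf Q (x, y)"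
      using assms by (simp add: Pss_def)
    then show ?thesis
      by (simp add: Pair sum_distrib_right[symmetric] case_prod_unfold)
  qed
  then show ?thesis by (simp add: sum_Omega)
qed

lemma marg_Pss_src:
  fixes p :: "nat \<times> nat \<times> 'x::finite \<times> 'y::finite \<Rightarrow> real"
  assumes "p \<in> Pss Q"
  shows "marg (Omega TYPE('x) TYPE('y)) p (\<lambda>\<omega>. h (src_x \<omega>, src_y \<omega>)) v
    = (\<Sum>z\<in>UNIV. if h z = v then pmf Q z else 0)"
  using sum_Pss_src[OF assms, of "\<lambda>z. if h z = v then 1 else 0"]
  by (simp add: marg_def sum.inter_filter[symmetric] if_distrib cong: if_cong)

lemma cond_ent_Pss_src:
  fixes p :: "nat \<times> nat \<times> 'x::finite \<times> 'y::finite \<Rightarrow> real"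
  assumes "p \<in> Pss Q"
  shows "cond_ent (Omega TYPE('x) TYPE('y)) p src_x src_y = cond_entropy Q"
proof -
  have "marg (Omega TYPE('x) TYPE('y)) p (\<lambda>\<omega>. (src_x \<omega>, src_y \<omega>)) z = pmf Q z" for z
    using marg_Pss_src[OF assms, of "\<lambda>z. z" z] by simp
  moreover have "marg (Omega TYPE('x) TYPE('y)) p src_y y = marg_snd Q y" for y
    using marg_Pss_src[OF assms, of snd y]
    by (simp add: marg_snd_def sum.If_cases UNIV_Times_UNIV[symmetric] sum.cartesian_product'
        del: UNIV_Times_UNIV)
  ultimately show ?thesis
    unfolding cond_ent_def cond_entropy_def
    using sum_Pss_src[OF assms, of "\<lambda>z. log 2 (pmf Q z / marg_snd Q (snd z))"] by simp
qed

definition swap_aux :: "nat \<times> nat \<times> 'x \<times> 'y \<Rightarrow> nat \<times> nat \<times> 'y \<times> 'x" where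
  "swap_aux = (\<lambda>(a, b, x, y). (b, a, y, x))"

lemma swap_aux_simp [simp]: "swap_aux (a, b, x, y) = (b, a, y, x)"
  by (simp add: swap_aux_def)

lemma aux_card_commute: "aux_card TYPE('x) TYPE('y) = aux_card TYPE('y) TYPE('x)"
  by (simp add: aux_card_def mult.commute)

lemma swap_aux_mem_Omega:
  "swap_aux \<omega> \<in> Omega TYPE('y) TYPE('x) \<longleftrightarrow> \<omega> \<in> Omega TYPE('x) TYPE('y)"
  for \<omega> :: "nat \<times> nat \<times> 'x \<times> 'y"
  by (cases \<omega>) (auto simp: mem_Omega aux_card_commute[where 'x = 'y and 'y = 'x])

lemma bij_swap_aux: "bij_betw swap_aux (Omega TYPE('x) TYPE('y)) (Omega TYPE('y) TYPE('x))"
proof (rule bij_betw_byWitness[where f' = swap_aux])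
  show "swap_aux ` Omega TYPE('x) TYPE('y) \<subseteq> Omega TYPE('y) TYPE('x)"
    using swap_aux_mem_Omega by blast
  show "swap_aux ` Omega TYPE('y) TYPE('x) \<subseteq> Omega TYPE('x) TYPE('y)"
    using swap_aux_mem_Omega[where 'x = 'y and 'y = 'x] by blast
qed (auto simp: swap_aux_def)

lemma Pss_swap:
  fixes p :: "nat \<times> nat \<times> 'x::finite \<times> 'y::finite \<Rightarrow> real"
  assumes "p \<in> Pss Q"
  shows "(\<lambda>\<omega>. p (swap_aux \<omega>)) \<in> Pss (map_pmf prod.swap Q)"
proof -
  let ?K = "aux_card TYPE('x) TYPE('y)"
  note K = aux_card_commute[where 'x = 'y and 'y = 'x]
  note mem = swap_aux_mem_Omega[where 'x = 'y and 'y = 'x]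
  have zero: "\<And>\<omega>. \<omega> \<notin> Omega TYPE('x) TYPE('y) \<Longrightarrow> p \<omega> = 0"
    and nonneg: "\<And>\<omega>. \<omega> \<in> Omega TYPE('x) TYPE('y) \<Longrightarrow> 0 \<le> p \<omega>"
    and sum: "\<And>x y. (\<Sum>(a, b)\<in>{..<?K} \<times> {..<?K}. p (a, b, x, y)) = pmf Q (x, y)"
    using assms unfolding Pss_def by blast+
  have "(\<Sum>(a, b)\<in>{..<?K} \<times> {..<?K}. p (b, a, x, y)) = (\<Sum>(a, b)\<in>{..<?K} \<times> {..<?K}. p (a, b, x, y))"
    for x y
    unfolding sum.cartesian_product' by (simp add: case_prod_unfold) (rule sum.swap)
  then show ?thesis
    unfolding Pss_def
  proof (intro CollectI conjI allI ballI impI)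
    fix \<omega> :: "nat \<times> nat \<times> 'y \<times> 'x"
    show "\<omega> \<notin> Omega TYPE('y) TYPE('x) \<Longrightarrow> p (swap_aux \<omega>) = 0"
      and "\<omega> \<in> Omega TYPE('y) TYPE('x) \<Longrightarrow> 0 \<le> p (swap_aux \<omega>)"
      using mem[of \<omega>] zero nonneg by blast+
  qed (simp_all add: K sum pmf_swap)
qed

lemma cond_ent_swap_aux:
  fixes p :: "nat \<times> nat \<times> 'x::finite \<times> 'y::finite \<Rightarrow> real"
  shows "cond_ent (Omega TYPE('x) TYPE('y)) p F G
    = cond_ent (Omega TYPE('y) TYPE('x)) (\<lambda>\<omega>. p (swap_aux \<omega>)) (\<lambda>\<omega>. F (swap_aux \<omega>)) (\<lambda>\<omega>. G (swap_aux \<omega>))"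
  using bij_swap_aux[where 'x = 'y and 'y = 'x]
  by (rule cond_ent_reindex[symmetric])

lemma cond_ent_Pss_src_swap:
  fixes p :: "nat \<times> nat \<times> 'x::finite \<times> 'y::finite \<Rightarrow> real"
  assumes "p \<in> Pss Q"
  shows "cond_ent (Omega TYPE('x) TYPE('y)) p src_y src_x = cond_entropy (map_pmf prod.swap Q)"
proof -
  have swap: "(\<lambda>\<omega>. src_y (swap_aux \<omega>)) = src_x" "(\<lambda>\<omega>. src_x (swap_aux \<omega>)) = src_y"
    by (auto simp: fun_eq_iff src_x_def src_y_def)
  show ?thesis
    unfolding cond_ent_swap_aux[of p] swap by (rule cond_ent_Pss_src[OF Pss_swap[OF assms]])
qed

definition rate_region :: "('x::finite \<times> 'y::finite) pmf \<Rightarrow> (real \<times> real \<times> real) set" where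
  "rate_region Q = {(R0, R1, R2). 0 \<le> R0 \<and> 0 \<le> R1 \<and> 0 \<le> R2 \<and>
     cond_entropy Q \<le> R0 + R1 \<and> cond_entropy (map_pmf prod.swap Q) \<le> R0 + R2}"

lemma closed_rate_region: "closed (rate_region Q)"
proof -
  have "rate_region Q = {R. 0 \<le> fst R} \<inter> {R. 0 \<le> fst (snd R)} \<inter> {R. 0 \<le> snd (snd R)} \<inter>
      {R. cond_entropy Q \<le> fst R + fst (snd R)} \<inter>
      {R. cond_entropy (map_pmf prod.swap Q) \<le> fst R + snd (snd R)}"
    by (auto simp: rate_region_def)
  also have "closed \<dots>"
    by (intro closed_Int closed_Collect_le continuous_intros)
  finally show ?thesis .
qed

lemma Rss_subset_rate_region:
  fixes p :: "nat \<times> nat \<times> 'x::finite \<times> 'y::finite \<Rightarrow> real"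
  assumes "p \<in> Pss Q"
  shows "Rss p \<subseteq> rate_region Q"
proof -
  let ?\<Omega> = "Omega TYPE('x) TYPE('y)"
  have nonneg: "\<And>\<omega>. \<omega> \<in> ?\<Omega> \<Longrightarrow> 0 \<le> p \<omega>"
    using Pss_nonneg[OF assms] by blast
  have "cond_ent ?\<Omega> p src_x (\<lambda>w. (aux_a w, src_y w)) \<le> cond_ent ?\<Omega> p src_x src_y"
    by (rule cond_ent_mono[OF finite_Omega nonneg])
  moreover have "cond_ent ?\<Omega> p src_y (\<lambda>w. (aux_b w, src_x w)) \<le> cond_ent ?\<Omega> p src_y src_x"
    by (rule cond_ent_mono[OF finite_Omega nonneg])
  moreover have "0 \<le> cond_ent ?\<Omega> p src_x (\<lambda>w. (aux_a w, src_y w))"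
    by (rule cond_ent_nonneg[OF finite_Omega nonneg])
  moreover have "0 \<le> cond_ent ?\<Omega> p src_y (\<lambda>w. (aux_b w, src_x w))"
    by (rule cond_ent_nonneg[OF finite_Omega nonneg])
  ultimately show ?thesis
    using cond_ent_Pss_src[OF assms] cond_ent_Pss_src_swap[OF assms]
    by (auto simp: Rss_eq rate_region_def cond_mi_def)
qed

definition aux_joint ::
  "('x::finite \<times> 'y::finite) pmf \<Rightarrow> (nat \<Rightarrow> 'x \<Rightarrow> real) \<Rightarrow> (nat \<Rightarrow> 'y \<Rightarrow> real) \<Rightarrow> nat \<times> nat \<times> 'x \<times> 'y \<Rightarrow> real"
where
  "aux_joint Q \<alpha> \<beta> \<omega> = (if \<omega> \<in> Omega TYPE('x) TYPE('y) then
      (case \<omega> of (a, b, x, y) \<Rightarrow> pmf Q (x, y) * \<alpha> a x * \<beta> b y) else 0)"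

lemma aux_joint_in_Pss:
  fixes Q :: "('x::finite \<times> 'y::finite) pmf"
  assumes "\<And>a x. 0 \<le> \<alpha> a x" "\<And>b y. 0 \<le> \<beta> b y"
    and "\<And>x. (\<Sum>a<aux_card TYPE('x) TYPE('y). \<alpha> a x) = 1"
    and "\<And>y. (\<Sum>b<aux_card TYPE('x) TYPE('y). \<beta> b y) = 1"
  shows "aux_joint Q \<alpha> \<beta> \<in> Pss Q"
  unfolding Pss_def
proof (intro CollectI conjI allI ballI impI)
  fix x y
  show "(\<Sum>(a, b)\<in>{..<aux_card TYPE('x) TYPE('y)} \<times> {..<aux_card TYPE('x) TYPE('y)}.
      aux_joint Q \<alpha> \<beta> (a, b, x, y)) = pmf Q (x, y)"
  proof -
    let ?A = "{..<aux_card TYPE('x) TYPE('y)}"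
    have "(\<Sum>(a, b)\<in>?A \<times> ?A. aux_joint Q \<alpha> \<beta> (a, b, x, y))
        = (\<Sum>a\<in>?A. \<Sum>b\<in>?A. pmf Q (x, y) * \<alpha> a x * \<beta> b y)"
      by (simp add: sum.cartesian_product' aux_joint_def mem_Omega)
    also have "\<dots> = pmf Q (x, y) * ((\<Sum>a\<in>?A. \<alpha> a x) * (\<Sum>b\<in>?A. \<beta> b y))"
      unfolding sum_product by (simp add: sum_distrib_left mult.assoc)
    finally show ?thesis
      using assms(3,4) by (simp add: lessThan_def)
  qed
qed (use assms in \<open>auto simp: aux_joint_def split: prod.split\<close>)

lemma marg_aux_joint_x_a_y:
  fixes Q :: "('x::finite \<times> 'y::finite) pmf"
  assumes "a < aux_card TYPE('x) TYPE('y)" and "\<And>y. (\<Sum>b<aux_card TYPE('x) TYPE('y). \<beta> b y) = 1"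
  shows "marg (Omega TYPE('x) TYPE('y)) (aux_joint Q \<alpha> \<beta>) (\<lambda>w. (src_x w, aux_a w, src_y w)) (x, a, y)
    = pmf Q (x, y) * \<alpha> a x"
proof -
  let ?K = "aux_card TYPE('x) TYPE('y)"
  have "{\<omega> \<in> Omega TYPE('x) TYPE('y). (src_x \<omega>, aux_a \<omega>, src_y \<omega>) = (x, a, y)} = (\<lambda>b. (a, b, x, y)) ` {..<?K}"
    using assms(1) by (auto simp: Omega_def image_iff src_x_def src_y_def aux_a_def)
  then have "marg (Omega TYPE('x) TYPE('y)) (aux_joint Q \<alpha> \<beta>) (\<lambda>w. (src_x w, aux_a w, src_y w)) (x, a, y)
      = (\<Sum>b<?K. aux_joint Q \<alpha> \<beta> (a, b, x, y))"
    by (simp add: marg_def sum.reindex inj_on_def)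
  also have "\<dots> = (\<Sum>b<?K. pmf Q (x, y) * \<alpha> a x * \<beta> b y)"
    using assms(1) by (intro sum.cong) (auto simp: aux_joint_def mem_Omega)
  finally show ?thesis
    using assms(2) by (simp add: sum_distrib_left[symmetric])
qed

lemma marg_aux_joint_a_y:
  fixes Q :: "('x::finite \<times> 'y::finite) pmf"
  assumes "a < aux_card TYPE('x) TYPE('y)" and "\<And>y. (\<Sum>b<aux_card TYPE('x) TYPE('y). \<beta> b y) = 1"
  shows "marg (Omega TYPE('x) TYPE('y)) (aux_joint Q \<alpha> \<beta>) (\<lambda>w. (aux_a w, src_y w)) (a, y)
    = (\<Sum>x\<in>UNIV. pmf Q (x, y) * \<alpha> a x)"
proof -
  let ?K = "aux_card TYPE('x) TYPE('y)"
  have "{\<omega> \<in> Omega TYPE('x) TYPE('y). (aux_a \<omega>, src_y \<omega>) = (a, y)} = (\<lambda>(b, x). (a, b, x, y)) ` ({..<?K} \<times> UNIV)"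
    using assms(1) by (auto simp: Omega_def image_iff src_y_def aux_a_def)
  then have "marg (Omega TYPE('x) TYPE('y)) (aux_joint Q \<alpha> \<beta>) (\<lambda>w. (aux_a w, src_y w)) (a, y)
      = (\<Sum>(b, x)\<in>{..<?K} \<times> UNIV. aux_joint Q \<alpha> \<beta> (a, b, x, y))"
    by (simp add: marg_def sum.reindex inj_on_def case_prod_unfold)
  also have "\<dots> = (\<Sum>b<?K. \<Sum>x\<in>UNIV. pmf Q (x, y) * \<alpha> a x * \<beta> b y)"
    using assms(1) by (simp add: sum.cartesian_product' aux_joint_def mem_Omega)
  also have "\<dots> = (\<Sum>x\<in>UNIV. \<Sum>b<?K. pmf Q (x, y) * \<alpha> a x * \<beta> b y)"
    by (rule sum.swap)
  finally show ?thesis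
    using assms(2) by (simp add: sum_distrib_left[symmetric])
qed

lemma cond_ent_aux_joint:
  fixes Q :: "('x::finite \<times> 'y::finite) pmf"
  assumes "\<And>y. (\<Sum>b<aux_card TYPE('x) TYPE('y). \<beta> b y) = 1"
  shows "cond_ent (Omega TYPE('x) TYPE('y)) (aux_joint Q \<alpha> \<beta>) src_x (\<lambda>w. (aux_a w, src_y w))
    = - (\<Sum>z\<in>UNIV. \<Sum>a<aux_card TYPE('x) TYPE('y). pmf Q z * \<alpha> a (fst z) *
          log 2 (pmf Q z * \<alpha> a (fst z) / (\<Sum>x\<in>UNIV. pmf Q (x, snd z) * \<alpha> a x)))"
proof -
  let ?K = "aux_card TYPE('x) TYPE('y)" and ?p = "aux_joint Q \<alpha> \<beta>"
  define L where "L a x y = log 2 (pmf Q (x, y) * \<alpha> a x / (\<Sum>x'\<in>UNIV. pmf Q (x', y) * \<alpha> a x'))" for a x y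
  have "cond_ent (Omega TYPE('x) TYPE('y)) ?p src_x (\<lambda>w. (aux_a w, src_y w))
      = - (\<Sum>\<omega>\<in>Omega TYPE('x) TYPE('y). ?p \<omega> * L (aux_a \<omega>) (src_x \<omega>) (src_y \<omega>))"
    unfolding cond_ent_def
  proof (intro arg_cong[where f = uminus] sum.cong refl)
    fix \<omega> assume "\<omega> \<in> Omega TYPE('x) TYPE('y)"
    then obtain a b x y where "\<omega> = (a, b, x, y)" "a < ?K"
      by (cases \<omega>) (auto simp: mem_Omega)
    then show "?p \<omega> * log 2 (marg (Omega TYPE('x) TYPE('y)) ?p (\<lambda>w. (src_x w, aux_a w, src_y w))
          (src_x \<omega>, aux_a \<omega>, src_y \<omega>) / marg (Omega TYPE('x) TYPE('y)) ?p (\<lambda>w. (aux_a w, src_y w))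
          (aux_a \<omega>, src_y \<omega>)) = ?p \<omega> * L (aux_a \<omega>) (src_x \<omega>) (src_y \<omega>)"
      using marg_aux_joint_x_a_y[OF _ assms] marg_aux_joint_a_y[OF _ assms] by (simp add: L_def)
  qed
  also have "\<dots> = - (\<Sum>z\<in>UNIV. \<Sum>(a, b)\<in>{..<?K} \<times> {..<?K}. pmf Q z * \<alpha> a (fst z) * \<beta> b (snd z) * L a (fst z) (snd z))"
    by (simp add: sum_Omega aux_joint_def mem_Omega case_prod_unfold)
  also have "\<dots> = - (\<Sum>z\<in>UNIV. \<Sum>a<?K. pmf Q z * \<alpha> a (fst z) * L a (fst z) (snd z))"
  proof -
    have "(\<Sum>(a, b)\<in>{..<?K} \<times> {..<?K}. pmf Q z * \<alpha> a (fst z) * \<beta> b (snd z) * L a (fst z) (snd z))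
        = (\<Sum>a<?K. pmf Q z * \<alpha> a (fst z) * L a (fst z) (snd z) * (\<Sum>b<?K. \<beta> b (snd z)))" for z
      by (simp add: sum.cartesian_product' sum_distrib_left mult_ac)
    then show ?thesis using assms by simp
  qed
  finally show ?thesis
    by (simp add: L_def)
qed

text \<open>An erasure channel: \<open>a = Suc (\<iota> x)\<close> reveals \<open>x\<close> with probability \<open>l\<close>, and \<open>a = 0\<close> erases it.\<close>
definition erasure :: "real \<Rightarrow> ('x \<Rightarrow> nat) \<Rightarrow> nat \<Rightarrow> 'x \<Rightarrow> real" where
  "erasure l \<iota> a x = (if a = 0 then 1 - l else if a = Suc (\<iota> x) then l else 0)"

lemma erasure_split: "erasure l \<iota> a x = (if a = 0 then 1 - l else 0) + (if a = Suc (\<iota> x) then l else 0)"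
  by (simp add: erasure_def)

lemma sum_erasure: "Suc (\<iota> x) < K \<Longrightarrow> (\<Sum>a<K. erasure l \<iota> a x) = 1"
  by (simp add: erasure_split sum.distrib)

lemma erasure_nonneg: "0 \<le> l \<Longrightarrow> l \<le> 1 \<Longrightarrow> 0 \<le> erasure l \<iota> a x"
  by (simp add: erasure_def)

lemma cond_ent_erasure:
  fixes Q :: "('x::finite \<times> 'y::finite) pmf" and \<iota> :: "'x \<Rightarrow> nat"
  assumes "inj \<iota>" and \<iota>: "\<And>x. Suc (\<iota> x) < aux_card TYPE('x) TYPE('y)"
    and \<beta>: "\<And>y. (\<Sum>b<aux_card TYPE('x) TYPE('y). \<beta> b y) = 1"
  shows "cond_ent (Omega TYPE('x) TYPE('y)) (aux_joint Q (erasure l \<iota>) \<beta>) src_x (\<lambda>w. (aux_a w, src_y w))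
    = (1 - l) * cond_entropy Q"
proof -
  define D where "D a y = (\<Sum>x'\<in>UNIV. pmf Q (x', y) * erasure l \<iota> a x')" for a y
  define T where "T a x y = pmf Q (x, y) * erasure l \<iota> a x * log 2 (pmf Q (x, y) * erasure l \<iota> a x / D a y)"
    for a x y
  have D0: "D 0 y = (1 - l) * marg_snd Q y" for y
    by (simp add: D_def erasure_def marg_snd_def sum_distrib_left mult.commute)
  have D1: "D (Suc (\<iota> x)) y = pmf Q (x, y) * l" for x y
  proof -
    have reveal: "erasure l \<iota> (Suc (\<iota> x)) x' = (if x' = x then l else 0)" for x'
      using \<open>inj \<iota>\<close> by (auto simp: erasure_def inj_eq)
    show ?thesis
      unfolding D_def reveal by (simp add: if_distrib sum.delta' cong: if_cong)
  qed
  have "(\<Sum>a<aux_card TYPE('x) TYPE('y). T a x y) = T 0 x y + T (Suc (\<iota> x)) x y" for x y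
  proof -
    have "T a x y = (if a = 0 then T 0 x y else 0) + (if a = Suc (\<iota> x) then T (Suc (\<iota> x)) x y else 0)" for a
      by (auto simp: T_def erasure_def)
    then have "(\<Sum>a<aux_card TYPE('x) TYPE('y). T a x y) = (\<Sum>a<aux_card TYPE('x) TYPE('y).
        (if a = 0 then T 0 x y else 0) + (if a = Suc (\<iota> x) then T (Suc (\<iota> x)) x y else 0))"
      by (intro sum.cong) simp_all
    then show ?thesis
      using \<iota>[of x] by (simp only: sum.distrib) simp
  qed
  moreover have "T 0 x y = (1 - l) * (pmf Q (x, y) * log 2 (pmf Q (x, y) / marg_snd Q y))" for x y
    by (cases "l = 1") (simp_all add: T_def D0 erasure_def)
  moreover have "T (Suc (\<iota> x)) x y = 0" for x y
    by (simp add: T_def D1 erasure_def)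
  ultimately have sum_T: "(\<Sum>a<aux_card TYPE('x) TYPE('y). T a x y)
      = (1 - l) * (pmf Q (x, y) * log 2 (pmf Q (x, y) / marg_snd Q y))" for x y
    by simp
  have "cond_ent (Omega TYPE('x) TYPE('y)) (aux_joint Q (erasure l \<iota>) \<beta>) src_x (\<lambda>w. (aux_a w, src_y w))
      = - (\<Sum>z\<in>UNIV. \<Sum>a<aux_card TYPE('x) TYPE('y). T a (fst z) (snd z))"
    by (simp add: cond_ent_aux_joint[OF \<beta>] T_def D_def)
  also have "\<dots> = (1 - l) * cond_entropy Q"
    by (simp add: sum_T cond_entropy_def sum_distrib_left)
  finally show ?thesis .
qed

lemma aux_joint_swap_aux:
  fixes Q :: "('x::finite \<times> 'y::finite) pmf"
  shows "(\<lambda>\<omega>. aux_joint Q \<alpha> \<beta> (swap_aux \<omega>)) = aux_joint (map_pmf prod.swap Q) \<beta> \<alpha>"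
proof
  fix \<omega> :: "nat \<times> nat \<times> 'y \<times> 'x"
  obtain a b y x where \<omega>: "\<omega> = (a, b, y, x)"
    by (cases \<omega>)
  have "(b, a, x, y) \<in> Omega TYPE('x) TYPE('y) \<longleftrightarrow> \<omega> \<in> Omega TYPE('y) TYPE('x)"
    using swap_aux_mem_Omega[where 'x = 'y and 'y = 'x, of \<omega>] by (simp add: \<omega>)
  then show "aux_joint Q \<alpha> \<beta> (swap_aux \<omega>) = aux_joint (map_pmf prod.swap Q) \<beta> \<alpha> \<omega>"
    by (simp add: \<omega> aux_joint_def pmf_swap mult_ac)
qed

lemma cond_ent_erasure_swap:
  fixes Q :: "('x::finite \<times> 'y::finite) pmf" and \<kappa> :: "'y \<Rightarrow> nat"
  assumes "inj \<kappa>" and \<kappa>: "\<And>y. Suc (\<kappa> y) < aux_card TYPE('x) TYPE('y)"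
    and \<alpha>: "\<And>x. (\<Sum>a<aux_card TYPE('x) TYPE('y). \<alpha> a x) = 1"
  shows "cond_ent (Omega TYPE('x) TYPE('y)) (aux_joint Q \<alpha> (erasure m \<kappa>)) src_y (\<lambda>w. (aux_b w, src_x w))
    = (1 - m) * cond_entropy (map_pmf prod.swap Q)"
proof -
  note K = aux_card_commute[where 'x = 'x and 'y = 'y]
  have swap: "(\<lambda>\<omega>. src_y (swap_aux \<omega>)) = src_x" "(\<lambda>\<omega>. (aux_b (swap_aux \<omega>), src_x (swap_aux \<omega>))) = (\<lambda>w. (aux_a w, src_y w))"
    by (auto simp: fun_eq_iff src_x_def src_y_def aux_a_def aux_b_def)
  show ?thesis
    unfolding cond_ent_swap_aux[of "aux_joint Q \<alpha> (erasure m \<kappa>)"] swap aux_joint_swap_aux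
    using assms by (intro cond_ent_erasure) (simp_all add: K)
qed

lemma exists_rate_split:
  fixes H R0 R1 :: real
  assumes "0 \<le> H" "0 \<le> R0" "0 \<le> R1" "H \<le> R0 + R1"
  obtains l where "0 \<le> l" "l \<le> 1" "l * H \<le> R1" "(1 - l) * H \<le> R0"
proof (cases "R1 < H")
  case True
  then have "0 < H" using assms by linarith
  then have "R1 / H * H = R1" "(1 - R1 / H) * H = H - R1"
    by (simp_all add: field_simps)
  then show ?thesis
    using that[of "R1 / H"] True assms \<open>0 < H\<close> by simp
next
  case False
  then show ?thesis using that[of 1] assms by simp
qed

lemma ex_inj_below_card: "\<exists>\<iota> :: 'x::finite \<Rightarrow> nat. inj \<iota> \<and> (\<forall>x. \<iota> x < CARD('x))"
proof -
  obtain f :: "'x \<Rightarrow> nat" and n where f: "f ` UNIV = {i. i < n}" "inj f"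
    using finite_imp_inj_to_nat_seg[of "UNIV :: 'x set"] by auto
  then have "n = CARD('x)"
    using card_image[of f UNIV] by simp
  then show ?thesis using f by blast
qed

lemma rate_region_subset_Union_Rss:
  fixes Q :: "('x::finite \<times> 'y::finite) pmf"
  shows "rate_region Q \<subseteq> (\<Union>p\<in>Pss Q. Rss p)"
proof
  fix R assume "R \<in> rate_region Q"
  then obtain R0 R1 R2 where R: "R = (R0, R1, R2)" "0 \<le> R0" "0 \<le> R1" "0 \<le> R2"
    "cond_entropy Q \<le> R0 + R1" "cond_entropy (map_pmf prod.swap Q) \<le> R0 + R2"
    by (auto simp: rate_region_def)
  obtain l where l: "0 \<le> l" "l \<le> 1" "l * cond_entropy Q \<le> R1" "(1 - l) * cond_entropy Q \<le> R0"
    using exists_rate_split[OF cond_entropy_nonneg R(2,3,5)] .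
  obtain m where m: "0 \<le> m" "m \<le> 1" "m * cond_entropy (map_pmf prod.swap Q) \<le> R2"
      "(1 - m) * cond_entropy (map_pmf prod.swap Q) \<le> R0"
    using exists_rate_split[OF cond_entropy_nonneg R(2,4,6)] .
  obtain \<iota> :: "'x \<Rightarrow> nat" and \<kappa> :: "'y \<Rightarrow> nat"
    where "inj \<iota>" "\<And>x. \<iota> x < CARD('x)" "inj \<kappa>" "\<And>y. \<kappa> y < CARD('y)"
    using ex_inj_below_card by metis
  then have \<iota>: "Suc (\<iota> x) < aux_card TYPE('x) TYPE('y)" and \<kappa>: "Suc (\<kappa> y) < aux_card TYPE('x) TYPE('y)"
    for x y
  proof -
    have "CARD('x) \<le> CARD('x) * CARD('y)" "CARD('y) \<le> CARD('x) * CARD('y)"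
      by simp_all
    then show "Suc (\<iota> x) < aux_card TYPE('x) TYPE('y)" "Suc (\<kappa> y) < aux_card TYPE('x) TYPE('y)"
      using \<open>\<iota> x < CARD('x)\<close> \<open>\<kappa> y < CARD('y)\<close> unfolding aux_card_def by linarith+
  qed
  have sum_\<iota>: "(\<Sum>a<aux_card TYPE('x) TYPE('y). erasure l \<iota> a x) = 1" for x
    using \<iota> by (rule sum_erasure)
  have sum_\<kappa>: "(\<Sum>b<aux_card TYPE('x) TYPE('y). erasure m \<kappa> b y) = 1" for y
    using \<kappa> by (rule sum_erasure)
  define p where "p = aux_joint Q (erasure l \<iota>) (erasure m \<kappa>)"
  have "p \<in> Pss Q"
    unfolding p_def using l m sum_\<iota> sum_\<kappa> by (intro aux_joint_in_Pss erasure_nonneg)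
  moreover have "R \<in> Rss p"
    using cond_ent_erasure[where \<beta> = "erasure m \<kappa>" and Q = Q and l = l, OF \<open>inj \<iota>\<close> \<iota> sum_\<kappa>]
      cond_ent_erasure_swap[where \<alpha> = "erasure l \<iota>" and Q = Q and m = m, OF \<open>inj \<kappa>\<close> \<kappa> sum_\<iota>]
      cond_ent_Pss_src[OF \<open>p \<in> Pss Q\<close>] cond_ent_Pss_src_swap[OF \<open>p \<in> Pss Q\<close>] R l m
    by (simp add: Rss_eq p_def cond_mi_def algebra_simps)
  ultimately show "R \<in> (\<Union>p\<in>Pss Q. Rss p)" by blast
qed

subsection \<open>Converse\<close>

lemma err_x_eq_prob_blocks:
  "err_x Q n e dx = prob_blocks Q n (\<lambda>xs ys. dx (fst (e xs ys)) (fst (snd (e xs ys))) ys \<noteq> xs)"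
  unfolding err_x_def prob_blocks_def by (intro sum.cong) (auto split: prod.split)

lemma err_y_eq_prob_blocks:
  "err_y Q n e dy
    = prob_blocks (map_pmf prod.swap Q) n (\<lambda>ys xs. dy (fst (e xs ys)) (snd (snd (e xs ys))) xs \<noteq> ys)"
proof -
  have "err_y Q n e dy = (\<Sum>(ys, xs)\<in>blocks n.
      case e xs ys of (k0, k1, k2) \<Rightarrow> if dy k0 k2 xs \<noteq> ys then blockprob Q xs ys else 0)"
    unfolding err_y_def by (rule sum_blocks_swap)
  also have "\<dots> = prob_blocks (map_pmf prod.swap Q) n
      (\<lambda>ys xs. dy (fst (e xs ys)) (snd (snd (e xs ys))) xs \<noteq> ys)"
    unfolding prob_blocks_def
    by (intro sum.cong) (auto simp: blockprob_swap blocks_def split: prod.split)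
  finally show ?thesis .
qed

definition good_code :: "('x \<times> 'y) pmf \<Rightarrow> real \<Rightarrow> real \<times> real \<times> real \<Rightarrow> nat \<Rightarrow> bool" where
  "good_code Q \<epsilon> R n \<longleftrightarrow> (case R of (R0, R1, R2) \<Rightarrow>
     \<exists>(m0::nat) (m1::nat) (m2::nat) (e :: 'x list \<Rightarrow> 'y list \<Rightarrow> nat \<times> nat \<times> nat)
        (dx :: nat \<Rightarrow> nat \<Rightarrow> 'y list \<Rightarrow> 'x list) (dy :: nat \<Rightarrow> nat \<Rightarrow> 'x list \<Rightarrow> 'y list).
          0 < m0 \<and> 0 < m1 \<and> 0 < m2 \<and>
          (\<forall>(xs, ys)\<in>blocks n. e xs ys \<in> {1..m0} \<times> {1..m1} \<times> {1..m2}) \<and>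
          max (err_x Q n e dx) (err_y Q n e dy) \<le> \<epsilon> \<and>
          log 2 (real m0) / real n \<le> R0 + \<epsilon> \<and>
          log 2 (real m1) / real n \<le> R1 + \<epsilon> \<and>
          log 2 (real m2) / real n \<le> R2 + \<epsilon>)"

lemma achievable_iff_good_code:
  "achievable Q (R0, R1, R2) \<longleftrightarrow> (\<forall>\<epsilon>>0. eventually (good_code Q \<epsilon> (R0, R1, R2)) sequentially)"
  unfolding achievable_def good_code_def eventually_sequentially prod.case ..

lemma good_codeE:
  assumes "good_code Q \<epsilon> (R0, R1, R2) n"
  obtains m0 m1 m2 e dx dy where "0 < m0" "0 < m1" "0 < m2"
    "\<forall>(xs, ys)\<in>blocks n. e xs ys \<in> {1..m0} \<times> {1..m1} \<times> {1..m2}"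
    "err_x Q n e dx \<le> \<epsilon>" "err_y Q n e dy \<le> \<epsilon>"
    "log 2 (real m0) / real n \<le> R0 + \<epsilon>" "log 2 (real m1) / real n \<le> R1 + \<epsilon>"
    "log 2 (real m2) / real n \<le> R2 + \<epsilon>"
  using assms unfolding good_code_def prod.case max.bounded_iff by (elim exE conjE) (rule that)

lemma good_codeI:
  assumes "0 < mc" "0 < mx" "0 < my"
    "\<forall>(xs, ys)\<in>blocks n. e xs ys \<in> {1..mc} \<times> {1..mx} \<times> {1..my}"
    "err_x Q n e dx \<le> \<epsilon>" "err_y Q n e dy \<le> \<epsilon>"
    "log 2 (real mc) / real n \<le> R0 + \<epsilon>" "log 2 (real mx) / real n \<le> R1 + \<epsilon>"
    "log 2 (real my) / real n \<le> R2 + \<epsilon>"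
  shows "good_code Q \<epsilon> (R0, R1, R2) n"
  unfolding good_code_def prod.case using assms
  by (intro exI[of _ mc] exI[of _ mx] exI[of _ my] exI[of _ e] exI[of _ dx] exI[of _ dy]) simp

lemma good_code_swap:
  fixes Q :: "('x \<times> 'y) pmf"
  assumes "good_code Q \<epsilon> (R0, R1, R2) n"
  shows "good_code (map_pmf prod.swap Q) \<epsilon> (R0, R2, R1) n"
proof -
  obtain m0 m1 m2 e dx dy where code: "0 < m0" "0 < m1" "0 < m2"
    "\<forall>(xs, ys)\<in>blocks n. e xs ys \<in> {1..m0} \<times> {1..m1} \<times> {1..m2}"
    "err_x Q n e dx \<le> \<epsilon>" "err_y Q n e dy \<le> \<epsilon>"
    "log 2 (real m0) / real n \<le> R0 + \<epsilon>" "log 2 (real m1) / real n \<le> R1 + \<epsilon>"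
    "log 2 (real m2) / real n \<le> R2 + \<epsilon>"
    using assms by (rule good_codeE)
  define e' where "e' ys xs = (case e xs ys of (k0, k1, k2) \<Rightarrow> (k0, k2, k1))" for ys xs
  have "\<forall>(ys, xs)\<in>blocks n. e' ys xs \<in> {1..m0} \<times> {1..m2} \<times> {1..m1}"
  proof clarify
    fix ys :: "'y list" and xs :: "'x list"
    assume "(ys, xs) \<in> blocks n"
    then have "(xs, ys) \<in> blocks n" by (simp add: blocks_def)
    from bspec[OF code(4) this] show "e' ys xs \<in> {1..m0} \<times> {1..m2} \<times> {1..m1}"
      by (auto simp: e'_def split: prod.split)
  qed
  moreover have "err_x (map_pmf prod.swap Q) n e' dy = err_y Q n e dy"
    "err_y (map_pmf prod.swap Q) n e' dx = err_x Q n e dx"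
    by (simp_all add: err_x_eq_prob_blocks err_y_eq_prob_blocks e'_def case_prod_unfold)
  ultimately show ?thesis
    using code by (intro good_codeI[where mx = m2 and my = m1 and e = e' and dx = dy and dy = dx]) simp_all
qed

lemma achievable_swap:
  assumes "achievable Q (R0, R1, R2)"
  shows "achievable (map_pmf prod.swap Q) (R0, R2, R1)"
  using assms unfolding achievable_iff_good_code by (blast intro: eventually_mono good_code_swap)

lemma log_rate_nonneg: "0 < m \<Longrightarrow> 0 \<le> log 2 (real m) / real n"
  by simp

lemma nonneg_if_ge_neg_eps:
  fixes x :: real
  assumes "\<And>\<epsilon>. 0 < \<epsilon> \<Longrightarrow> - \<epsilon> \<le> x"
  shows "0 \<le> x"
  using assms[of "- x / 2"] by linarith

lemma achievable_nonneg:
  assumes "achievable Q (R0, R1, R2)"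
  shows "0 \<le> R0" "0 \<le> R1" "0 \<le> R2"
proof -
  have "- \<epsilon> \<le> R0 \<and> - \<epsilon> \<le> R1 \<and> - \<epsilon> \<le> R2" if \<epsilon>: "0 < \<epsilon>" for \<epsilon>
  proof -
    obtain N where "\<And>n. N \<le> n \<Longrightarrow> good_code Q \<epsilon> (R0, R1, R2) n"
      using assms \<epsilon> unfolding achievable_iff_good_code eventually_sequentially by blast
    then have "good_code Q \<epsilon> (R0, R1, R2) N"
      by simp
    then obtain m0 m1 m2 where "0 < m0" "0 < m1" "0 < m2"
      "log 2 (real m0) / real N \<le> R0 + \<epsilon>" "log 2 (real m1) / real N \<le> R1 + \<epsilon>"
      "log 2 (real m2) / real N \<le> R2 + \<epsilon>"
      by (elim good_codeE) (rule that)
    then show ?thesis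
      using log_rate_nonneg[of m0 N] log_rate_nonneg[of m1 N] log_rate_nonneg[of m2 N] by linarith
  qed
  then show "0 \<le> R0" "0 \<le> R1" "0 \<le> R2"
    using nonneg_if_ge_neg_eps by blast+
qed

lemma le_powr_of_log_rate:
  assumes "0 < n" "0 < m" "log 2 (real m) / real n \<le> r"
  shows "real m \<le> 2 powr (real n * r)"
proof -
  have "log 2 (real m) \<le> real n * r"
    using assms by (simp add: divide_le_eq mult.commute)
  then have "2 powr (log 2 (real m)) \<le> 2 powr (real n * r)"
    by (intro powr_mono) auto
  then show ?thesis
    using assms(2) by simp
qed

lemma good_codeE_x:
  fixes Q :: "('x \<times> 'y) pmf"
  assumes "good_code Q \<epsilon> (R0, R1, R2) n" "0 < n"
  obtains M :: "(nat \<times> nat) set" and e :: "'x list \<Rightarrow> 'y list \<Rightarrow> nat \<times> nat" and d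
  where "finite M" "\<forall>(xs, ys)\<in>blocks n. e xs ys \<in> M"
    "real (card M) \<le> 2 powr (real n * (R0 + R1 + 2 * \<epsilon>))"
    "prob_blocks Q n (\<lambda>xs ys. d (e xs ys) ys \<noteq> xs) \<le> \<epsilon>"
proof -
  obtain m0 m1 m2 e dx dy where "0 < m0" "0 < m1"
    and range: "\<forall>(xs, ys)\<in>blocks n. e xs ys \<in> {1..m0} \<times> {1..m1} \<times> {1..m2}"
    and err: "err_x Q n e dx \<le> \<epsilon>"
    and rate: "log 2 (real m0) / real n \<le> R0 + \<epsilon>" "log 2 (real m1) / real n \<le> R1 + \<epsilon>"
    using assms(1) by (elim good_codeE)
  have "real (card ({1..m0} \<times> {1..m1})) = real m0 * real m1"
    by simp
  also have "\<dots> \<le> 2 powr (real n * (R0 + \<epsilon>)) * 2 powr (real n * (R1 + \<epsilon>))"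
    using le_powr_of_log_rate[OF \<open>0 < n\<close> \<open>0 < m0\<close> rate(1)] le_powr_of_log_rate[OF \<open>0 < n\<close> \<open>0 < m1\<close> rate(2)]
    by (intro mult_mono) auto
  also have "\<dots> = 2 powr (real n * (R0 + R1 + 2 * \<epsilon>))"
    by (simp add: powr_add[symmetric] algebra_simps)
  finally show ?thesis
    using range err
    by (intro that[of "{1..m0} \<times> {1..m1}" "\<lambda>xs ys. (fst (e xs ys), fst (snd (e xs ys)))"
          "\<lambda>k ys. dx (fst k) (snd k) ys"])
      (auto simp: case_prod_unfold mem_Times_iff err_x_eq_prob_blocks)
qed

lemma achievable_cond_entropy_le:
  fixes Q :: "('x::finite \<times> 'y::finite) pmf"
  assumes "achievable Q (R0, R1, R2)"
  shows "cond_entropy Q \<le> R0 + R1"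
proof (rule ccontr)
  assume "\<not> cond_entropy Q \<le> R0 + R1"
  define \<gamma> where "\<gamma> = (cond_entropy Q - R0 - R1) / 2"
  define \<epsilon> where "\<epsilon> = min (\<gamma> / 4) (1 / 4)"
  have "0 < \<gamma>"
    using \<open>\<not> cond_entropy Q \<le> R0 + R1\<close> by (simp add: \<gamma>_def)
  then have "0 < \<epsilon>" "\<epsilon> \<le> 1 / 4" "\<epsilon> \<le> \<gamma> / 4"
    by (simp_all add: \<epsilon>_def)
  moreover have "2 * \<gamma> = cond_entropy Q - R0 - R1"
    by (simp add: \<gamma>_def)
  ultimately have "R0 + R1 + 2 * \<epsilon> \<le> cond_entropy Q - \<gamma>"
    by linarith
  obtain N where N: "\<forall>n\<ge>N. \<forall>(M :: (nat \<times> nat) set) (e :: 'x list \<Rightarrow> 'y list \<Rightarrow> nat \<times> nat) d.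
      finite M \<longrightarrow> (\<forall>(xs, ys)\<in>blocks n. e xs ys \<in> M) \<longrightarrow>
      real (card M) \<le> 2 powr (real n * (cond_entropy Q - \<gamma>)) \<longrightarrow>
      prob_blocks Q n (\<lambda>xs ys. d (e xs ys) ys = xs) \<le> 1 / 2"
    using eventually_decoding_unreliable[where Q = Q, OF \<open>0 < \<gamma>\<close>]
    unfolding eventually_sequentially by (elim exE) (rule that)
  obtain N' where N': "\<And>n. N' \<le> n \<Longrightarrow> good_code Q \<epsilon> (R0, R1, R2) n"
    using assms \<open>0 < \<epsilon>\<close> unfolding achievable_iff_good_code eventually_sequentially by blast
  define n where "n = max N N' + 1"
  have "good_code Q \<epsilon> (R0, R1, R2) n" "0 < n"
    using N' by (simp_all add: n_def)
  then obtain M :: "(nat \<times> nat) set" and e d where "finite M" and range: "\<forall>(xs, ys)\<in>blocks n. e xs ys \<in> M"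
    and card: "real (card M) \<le> 2 powr (real n * (R0 + R1 + 2 * \<epsilon>))"
    and err: "prob_blocks Q n (\<lambda>xs ys. d (e xs ys) ys \<noteq> xs) \<le> \<epsilon>"
    by (rule good_codeE_x)
  have "2 powr (real n * (R0 + R1 + 2 * \<epsilon>)) \<le> 2 powr (real n * (cond_entropy Q - \<gamma>))"
    using \<open>R0 + R1 + 2 * \<epsilon> \<le> cond_entropy Q - \<gamma>\<close> by (intro powr_mono mult_left_mono) auto
  with card have "real (card M) \<le> 2 powr (real n * (cond_entropy Q - \<gamma>))"
    by linarith
  then have "prob_blocks Q n (\<lambda>xs ys. d (e xs ys) ys = xs) \<le> 1 / 2"
    using N \<open>finite M\<close> range by (simp add: n_def)
  then show False
    using err \<open>\<epsilon> \<le> 1 / 4\<close> prob_blocks_not[of Q n "\<lambda>xs ys. d (e xs ys) ys = xs"] by simp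
qed

subsection \<open>Achievability\<close>

lemma add_mod_cancel_right:
  fixes u v m :: nat
  assumes "u < m" "v < m"
  shows "((u + v) mod m + m - v) mod m = u"
proof (cases "u + v < m")
  case True
  then show ?thesis using assms by simp
next
  case False
  then have "(u + v) mod m = u + v - m"
    using assms by (simp add: le_mod_geq)
  then show ?thesis using False assms by simp
qed

text \<open>The common message carries the sum of the two bin indices modulo \<open>m0\<close>; each decoder knows the
  other bin index from its side information and subtracts it.\<close>
lemma shared_index_code:
  fixes Q :: "('x \<times> 'y) pmf" and cX :: "'x list \<Rightarrow> nat" and cY :: "'y list \<Rightarrow> nat"
    and dX :: "nat \<Rightarrow> 'y list \<Rightarrow> 'x list" and dY :: "nat \<Rightarrow> 'x list \<Rightarrow> 'y list"
  assumes "0 < m0" "\<forall>xs. length xs = n \<longrightarrow> cX xs < Kx" "\<forall>ys. length ys = n \<longrightarrow> cY ys < Ky"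
  shows "\<exists>e dx dy. (\<forall>(xs, ys)\<in>blocks n. e xs ys \<in> {1..m0} \<times> {1..Kx div m0 + 1} \<times> {1..Ky div m0 + 1}) \<and>
    err_x Q n e dx = prob_blocks Q n (\<lambda>xs ys. dX (cX xs) ys \<noteq> xs) \<and>
    err_y Q n e dy = prob_blocks (map_pmf prod.swap Q) n (\<lambda>ys xs. dY (cY ys) xs \<noteq> ys)"
proof (intro exI conjI)
  define e where "e xs ys = ((cX xs mod m0 + cY ys mod m0) mod m0 + 1, cX xs div m0 + 1, cY ys div m0 + 1)"
    for xs ys
  define dx where "dx k0 k1 ys = dX ((k0 - 1 + m0 - cY ys mod m0) mod m0 + m0 * (k1 - 1)) ys" for k0 k1 ys
  define dy where "dy k0 k2 xs = dY ((k0 - 1 + m0 - cX xs mod m0) mod m0 + m0 * (k2 - 1)) xs" for k0 k2 xs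
  show "\<forall>(xs, ys)\<in>blocks n. e xs ys \<in> {1..m0} \<times> {1..Kx div m0 + 1} \<times> {1..Ky div m0 + 1}"
  proof clarify
    fix xs :: "'x list" and ys :: "'y list"
    assume "(xs, ys) \<in> blocks n"
    then have "cX xs \<le> Kx" "cY ys \<le> Ky"
      using assms(2,3) by (auto simp: blocks_def less_imp_le)
    then have "cX xs div m0 \<le> Kx div m0" "cY ys div m0 \<le> Ky div m0"
      by (simp_all add: div_le_mono)
    then show "e xs ys \<in> {1..m0} \<times> {1..Kx div m0 + 1} \<times> {1..Ky div m0 + 1}"
      using assms(1) by (simp add: e_def Suc_le_eq)
  qed
  have "dx (fst (e xs ys)) (fst (snd (e xs ys))) ys = dX (cX xs) ys" for xs ys
    using add_mod_cancel_right[of "cX xs mod m0" m0 "cY ys mod m0"] assms(1)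
    by (simp add: dx_def e_def mod_mult_div_eq)
  then show "err_x Q n e dx = prob_blocks Q n (\<lambda>xs ys. dX (cX xs) ys \<noteq> xs)"
    by (simp add: err_x_eq_prob_blocks)
  have "dy (fst (e xs ys)) (snd (snd (e xs ys))) xs = dY (cY ys) xs" for xs ys
    using add_mod_cancel_right[of "cY ys mod m0" m0 "cX xs mod m0"] assms(1)
    by (simp add: dy_def e_def mod_mult_div_eq add.commute)
  then show "err_y Q n e dy = prob_blocks (map_pmf prod.swap Q) n (\<lambda>ys xs. dY (cY ys) xs \<noteq> ys)"
    by (simp add: err_y_eq_prob_blocks)
qed

lemma log_rate_le:
  assumes "0 < n" "1 \<le> m" "real m \<le> 2 powr (c + real n * r)"
  shows "log 2 (real m) / real n \<le> r + c / real n"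
proof -
  have "log 2 (real m) \<le> log 2 (2 powr (c + real n * r))"
    using assms(2,3) by (subst log_le_cancel_iff) auto
  then have "log 2 (real m) \<le> c + real n * r"
    by simp
  then show ?thesis
    using assms(1) by (simp add: field_simps)
qed

lemma log_rate_nat_ceiling:
  assumes "0 < n" "0 \<le> r"
  shows "0 < nat \<lceil>2 powr (real n * r)\<rceil>"
    and "log 2 (real (nat \<lceil>2 powr (real n * r)\<rceil>)) / real n \<le> r + 1 / real n"
proof -
  have "1 \<le> 2 powr (real n * r)"
    using assms by (intro ge_one_powr_ge_zero) auto
  then show "0 < nat \<lceil>2 powr (real n * r)\<rceil>"
    by linarith
  have "real (nat \<lceil>2 powr (real n * r)\<rceil>) \<le> 2 powr (1 + real n * r)"
    using nat_ceiling_le_double[OF \<open>1 \<le> 2 powr (real n * r)\<close>] by (simp add: powr_add)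
  then show "log 2 (real (nat \<lceil>2 powr (real n * r)\<rceil>)) / real n \<le> r + 1 / real n"
    using \<open>1 \<le> 2 powr (real n * r)\<close> assms(1) by (intro log_rate_le) linarith+
qed

lemma log_rate_bin_quotient:
  assumes "0 < n" "0 \<le> R0" "0 \<le> R1" "0 \<le> H" "0 \<le> \<delta>" "H \<le> R0 + R1"
  shows "log 2 (real (nat \<lceil>2 powr (real n * (H + 2 * \<delta>))\<rceil> div nat \<lceil>2 powr (real n * R0)\<rceil> + 1)) / real n
    \<le> R1 + 2 * \<delta> + 2 / real n"
proof -
  define P where "P = 2 powr (real n * (H + 2 * \<delta>))"
  define P0 where "P0 = 2 powr (real n * R0)"
  define W where "W = 2 powr (real n * (R1 + 2 * \<delta>))"
  have "1 \<le> P" "1 \<le> P0" "1 \<le> W"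
    unfolding P_def P0_def W_def using assms by (auto intro!: ge_one_powr_ge_zero)
  have "P / P0 = 2 powr (real n * (H + 2 * \<delta> - R0))"
    by (simp add: P_def P0_def powr_diff[symmetric] algebra_simps)
  also have "\<dots> \<le> W"
    unfolding W_def using assms by (intro powr_mono mult_left_mono) auto
  finally have "P / P0 \<le> W" .
  have "real (nat \<lceil>P\<rceil> div nat \<lceil>P0\<rceil>) \<le> real (nat \<lceil>P\<rceil>) / real (nat \<lceil>P0\<rceil>)"
    by (rule of_nat_div_le_of_nat)
  also have "\<dots> \<le> 2 * P / P0"
    using nat_ceiling_le_double[OF \<open>1 \<le> P\<close>] real_nat_ceiling_ge[of P0] \<open>1 \<le> P0\<close>
    by (intro frac_le) auto
  also have "\<dots> \<le> 2 * W"
    using \<open>P / P0 \<le> W\<close> by simp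
  finally have "real (nat \<lceil>P\<rceil> div nat \<lceil>P0\<rceil> + 1) \<le> 2 powr (2 + real n * (R1 + 2 * \<delta>))"
    using \<open>1 \<le> W\<close> by (simp add: powr_add W_def)
  then show ?thesis
    unfolding P_def P0_def using assms(1) by (intro log_rate_le) (auto simp: algebra_simps)
qed

lemma good_code_of_binning_codes:
  fixes Q :: "('x::finite \<times> 'y::finite) pmf"
  assumes R: "(R0, R1, R2) \<in> rate_region Q" and "0 < n" "0 \<le> \<delta>" "2 * \<delta> + 2 / real n \<le> \<epsilon>"
    and cX: "\<forall>xs. length xs = n \<longrightarrow> cX xs < nat \<lceil>2 powr (real n * (cond_entropy Q + 2 * \<delta>))\<rceil>"
    and dX: "prob_blocks Q n (\<lambda>xs ys. dX (cX xs) ys \<noteq> xs) \<le> \<epsilon>"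
    and cY: "\<forall>ys. length ys = n \<longrightarrow> cY ys < nat \<lceil>2 powr (real n * (cond_entropy (map_pmf prod.swap Q) + 2 * \<delta>))\<rceil>"
    and dY: "prob_blocks (map_pmf prod.swap Q) n (\<lambda>ys xs. dY (cY ys) xs \<noteq> ys) \<le> \<epsilon>"
  shows "good_code Q \<epsilon> (R0, R1, R2) n"
proof -
  have "0 \<le> R0" "0 \<le> R1" "0 \<le> R2" "cond_entropy Q \<le> R0 + R1" "cond_entropy (map_pmf prod.swap Q) \<le> R0 + R2"
    using R by (auto simp: rate_region_def)
  note m0 = log_rate_nat_ceiling[OF \<open>0 < n\<close> \<open>0 \<le> R0\<close>]
  obtain e dx dy where
    range: "\<forall>(xs, ys)\<in>blocks n. e xs ys \<in> {1..nat \<lceil>2 powr (real n * R0)\<rceil>} \<times>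
      {1..nat \<lceil>2 powr (real n * (cond_entropy Q + 2 * \<delta>))\<rceil> div nat \<lceil>2 powr (real n * R0)\<rceil> + 1} \<times>
      {1..nat \<lceil>2 powr (real n * (cond_entropy (map_pmf prod.swap Q) + 2 * \<delta>))\<rceil> div nat \<lceil>2 powr (real n * R0)\<rceil> + 1}"
    and "err_x Q n e dx = prob_blocks Q n (\<lambda>xs ys. dX (cX xs) ys \<noteq> xs)"
    and "err_y Q n e dy = prob_blocks (map_pmf prod.swap Q) n (\<lambda>ys xs. dY (cY ys) xs \<noteq> ys)"
    using shared_index_code[OF m0(1) cX cY, of Q dX dY] by blast
  moreover have "log 2 (real (nat \<lceil>2 powr (real n * R0)\<rceil>)) / real n \<le> R0 + \<epsilon>"
    using m0(2) assms(3,4) divide_right_mono[of 1 2 "real n"] by linarith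
  moreover have "log 2 (real (nat \<lceil>2 powr (real n * (cond_entropy Q + 2 * \<delta>))\<rceil>
      div nat \<lceil>2 powr (real n * R0)\<rceil> + 1)) / real n \<le> R1 + \<epsilon>"
    using log_rate_bin_quotient[OF \<open>0 < n\<close> \<open>0 \<le> R0\<close> \<open>0 \<le> R1\<close> cond_entropy_nonneg \<open>0 \<le> \<delta>\<close>
        \<open>cond_entropy Q \<le> R0 + R1\<close>] assms(4) by linarith
  moreover have "log 2 (real (nat \<lceil>2 powr (real n * (cond_entropy (map_pmf prod.swap Q) + 2 * \<delta>))\<rceil>
      div nat \<lceil>2 powr (real n * R0)\<rceil> + 1)) / real n \<le> R2 + \<epsilon>"
    using log_rate_bin_quotient[OF \<open>0 < n\<close> \<open>0 \<le> R0\<close> \<open>0 \<le> R2\<close> cond_entropy_nonneg \<open>0 \<le> \<delta>\<close>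
        \<open>cond_entropy (map_pmf prod.swap Q) \<le> R0 + R2\<close>] assms(4) by linarith
  ultimately show ?thesis
    using dX dY by (intro good_codeI[where dx = dx and dy = dy, OF m0(1) _ _ range]) simp_all
qed

lemma rate_region_achievable:
  fixes Q :: "('x::finite \<times> 'y::finite) pmf"
  assumes "(R0, R1, R2) \<in> rate_region Q"
  shows "achievable Q (R0, R1, R2)"
  unfolding achievable_iff_good_code
proof (intro allI impI)
  fix \<epsilon> :: real
  assume "0 < \<epsilon>"
  define \<delta> where "\<delta> = \<epsilon> / 4"
  have "0 < \<delta>" using \<open>0 < \<epsilon>\<close> by (simp add: \<delta>_def)
  have "eventually (\<lambda>n.
      (\<exists>(cX :: 'x list \<Rightarrow> nat) dX. (\<forall>xs. length xs = n \<longrightarrow> cX xs < nat \<lceil>2 powr (real n * (cond_entropy Q + 2 * \<delta>))\<rceil>) \<and>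
        prob_blocks Q n (\<lambda>xs ys. dX (cX xs) ys \<noteq> xs) \<le> \<epsilon>) \<and>
      (\<exists>(cY :: 'y list \<Rightarrow> nat) dY.
        (\<forall>ys. length ys = n \<longrightarrow> cY ys < nat \<lceil>2 powr (real n * (cond_entropy (map_pmf prod.swap Q) + 2 * \<delta>))\<rceil>) \<and>
        prob_blocks (map_pmf prod.swap Q) n (\<lambda>ys xs. dY (cY ys) xs \<noteq> ys) \<le> \<epsilon>) \<and>
      0 < n \<and> 2 / real n \<le> \<epsilon> / 2) sequentially"
    using \<open>0 < \<delta>\<close> \<open>0 < \<epsilon>\<close>
    by (intro eventually_conj eventually_binning_code eventually_const_div_le) (auto simp: eventually_gt_at_top)
  then show "eventually (good_code Q \<epsilon> (R0, R1, R2)) sequentially"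
  proof (rule eventually_mono, elim conjE exE)
    fix n cX dX cY dY
    assume "0 < n" "2 / real n \<le> \<epsilon> / 2"
      and "\<forall>xs. length xs = n \<longrightarrow> cX xs < nat \<lceil>2 powr (real n * (cond_entropy Q + 2 * \<delta>))\<rceil>"
      and "prob_blocks Q n (\<lambda>xs ys. dX (cX xs) ys \<noteq> xs) \<le> \<epsilon>"
      and "\<forall>ys. length ys = n \<longrightarrow> cY ys < nat \<lceil>2 powr (real n * (cond_entropy (map_pmf prod.swap Q) + 2 * \<delta>))\<rceil>"
      and "prob_blocks (map_pmf prod.swap Q) n (\<lambda>ys xs. dY (cY ys) xs \<noteq> ys) \<le> \<epsilon>"
    moreover have "2 * \<delta> + 2 / real n \<le> \<epsilon>"
      using \<open>2 / real n \<le> \<epsilon> / 2\<close> by (simp add: \<delta>_def)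
    ultimately show "good_code Q \<epsilon> (R0, R1, R2) n"
      using \<open>0 < \<delta>\<close> by (intro good_code_of_binning_codes[OF assms]) auto
  qed
qed

lemma achievable_iff_rate_region:
  fixes Q :: "('x::finite \<times> 'y::finite) pmf"
  shows "achievable Q (R0, R1, R2) \<longleftrightarrow> (R0, R1, R2) \<in> rate_region Q"
proof
  assume A: "achievable Q (R0, R1, R2)"
  show "(R0, R1, R2) \<in> rate_region Q"
    using achievable_nonneg[OF A] achievable_cond_entropy_le[OF A]
      achievable_cond_entropy_le[OF achievable_swap[OF A]]
    unfolding rate_region_def by simp
qed (rule rate_region_achievable)

theorem theorem7:
  fixes Q :: "('x::finite \<times> 'y::finite) pmf"
  shows "achievable_region Q = closure (\<Union>p\<in>Pss Q. Rss p)"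
proof -
  have "(\<Union>p\<in>Pss Q. Rss p) = rate_region Q"
    using Rss_subset_rate_region rate_region_subset_Union_Rss by blast
  moreover have "achievable_region Q = rate_region Q"
    unfolding achievable_region_def by (auto simp: achievable_iff_rate_region)
  ultimately show ?thesis
    by (simp add: closed_rate_region)
qed

end
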